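(* Let $n\in\mathbb{N}$, $\hbar\in{]0,\infty[}$ and $\mu\in\mathbb{R}\setminus\big(\{\hbar k:k\in\mathbb{N}_0\}\cup\{-\hbar(1+n+k):k\in\mathbb{N}_0\}\big)$. Then $-\mathbb{1}\in(\mathcal{B}_\hbar)^{++}_{\mathrm H}+(\langle\mathcal{J}-\mu\rangle)_{\mathrm H}$.
   Context: $\mathscr{P}^{k,k}(\mathbb{C}^{1+n})$ is the span of $z^K\overline{z}^L$ ($K,L\in\mathbb{N}_0^{1+n}$, $|K|=|L|=k$). Wick product: $f\star_\hbar g=\sum_K\frac{\hbar^{|K|}}{K!}\frac{\partial^{|K|}f}{\partial\overline{z}^K}\frac{\partial^{|K|}g}{\partial z^K}$, involution pointwise conjugation. $\mathcal{B}_\hbar=\bigoplus_k\mathscr{P}^{k,k}(\mathbb{C}^{1+n})$ with $\star_\hbar$; $(\mathcal{B}_\hbar)^{++}_{\mathrm H}$ is the set of finite sums $\sum\overline{g_j}\star_\hbar g_j$; $\mathcal{J}=\sum_jz_j\overline{z_j}$; $\langle\mathcal{J}-\mu\rangle$ is the $^*$-ideal of $\mathcal{B}_\hbar$ generated by $\mathcal{J}-\mu\mathbb{1}$, and $(\cdot)_{\mathrm H}$ denotes its real-valued (Hermitian) elements. *)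

theory Defs
  imports Complex_Main
begin

text \<open>Polynomials in z, conj z on C^(1+n) (variables indexed by 0..n) are represented by
  their coefficient functions: p (K,L) is the coefficient of z^K (conj z)^L.
  Multi-indices are functions nat => nat vanishing outside {..n}.\<close>

type_synonym midx = "nat \<Rightarrow> nat"
type_synonym bpoly = "midx \<times> midx \<Rightarrow> complex"

definition idx_ok :: "nat \<Rightarrow> midx \<Rightarrow> bool" where
  "idx_ok n K \<longleftrightarrow> (\<forall>i>n. K i = 0)"

definition mdeg :: "nat \<Rightarrow> midx \<Rightarrow> nat" where
  "mdeg n K = (\<Sum>i\<le>n. K i)"

definition mfact :: "nat \<Rightarrow> midx \<Rightarrow> complex" where
  "mfact n K = (\<Prod>i\<le>n. fact (K i))"

text \<open>coefficient factor of the derivative d^M/dx^M x^L = L!/(L-M)! x^(L-M)\<close>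
definition dfactor :: "nat \<Rightarrow> midx \<Rightarrow> midx \<Rightarrow> complex" where
  "dfactor n L M = (\<Prod>i\<le>n. fact (L i) / fact (L i - M i))"

definition supp :: "bpoly \<Rightarrow> (midx \<times> midx) set" where
  "supp p = {m. p m \<noteq> 0}"

text \<open>The algebra B_hbar as a set: direct sum of the P^{k,k}.\<close>
definition Balg :: "nat \<Rightarrow> bpoly set" where
  "Balg n = {p. finite (supp p) \<and>
     (\<forall>K L. p (K, L) \<noteq> 0 \<longrightarrow> idx_ok n K \<and> idx_ok n L \<and> mdeg n K = mdeg n L)}"

text \<open>Wick product: f * g = sum_M hbar^|M|/M! (d^M f/d conj z^M) (d^M g/d z^M),
  extended bilinearly from monomials.\<close>
definition wick :: "nat \<Rightarrow> real \<Rightarrow> bpoly \<Rightarrow> bpoly \<Rightarrow> bpoly" where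
  "wick n h p q = (\<lambda>(K, L).
     \<Sum>a\<in>supp p. \<Sum>b\<in>supp q.
       \<Sum>M\<in>{M. idx_ok n M \<and> (\<forall>i. M i \<le> snd a i \<and> M i \<le> fst b i)}.
         (if K = (\<lambda>i. fst a i + fst b i - M i) \<and> L = (\<lambda>i. snd a i - M i + snd b i)
          then p a * q b * complex_of_real h ^ mdeg n M / mfact n M
               * dfactor n (snd a) M * dfactor n (fst b) M
          else 0))"

text \<open>Involution: pointwise complex conjugation of the polynomial function.\<close>
definition pstar :: "bpoly \<Rightarrow> bpoly" where
  "pstar p = (\<lambda>(K, L). cnj (p (L, K)))"

definition padd :: "bpoly \<Rightarrow> bpoly \<Rightarrow> bpoly" where
  "padd p q = (\<lambda>m. p m + q m)"

definition psmult :: "complex \<Rightarrow> bpoly \<Rightarrow> bpoly" where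
  "psmult c p = (\<lambda>m. c * p m)"

definition punit :: bpoly where
  "punit = (\<lambda>(K, L). if K = (\<lambda>_. 0) \<and> L = (\<lambda>_. 0) then 1 else 0)"

definition unitidx :: "nat \<Rightarrow> midx" where
  "unitidx j = (\<lambda>i. if i = j then 1 else 0)"

text \<open>J = sum_{j=0}^n z_j conj z_j\<close>
definition Jpoly :: "nat \<Rightarrow> bpoly" where
  "Jpoly n = (\<lambda>(K, L). if \<exists>j\<le>n. K = unitidx j \<and> L = unitidx j then 1 else 0)"

definition poscone :: "nat \<Rightarrow> real \<Rightarrow> bpoly set" where
  "poscone n h = {x. \<exists>(m::nat) g. (\<forall>j<m. g j \<in> Balg n) \<and>
       x = (\<lambda>c. \<Sum>j<m. wick n h (pstar (g j)) (g j) c)}"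

definition star_ideal :: "nat \<Rightarrow> real \<Rightarrow> bpoly set \<Rightarrow> bpoly set" where
  "star_ideal n h S = \<Inter>{I. I \<subseteq> Balg n \<and> S \<subseteq> I \<and> (\<lambda>_. 0) \<in> I
       \<and> (\<forall>x\<in>I. \<forall>y\<in>I. padd x y \<in> I)
       \<and> (\<forall>c. \<forall>x\<in>I. psmult c x \<in> I)
       \<and> (\<forall>a\<in>Balg n. \<forall>x\<in>I. wick n h a x \<in> I \<and> wick n h x a \<in> I)
       \<and> (\<forall>x\<in>I. pstar x \<in> I)}"

definition hermitian_part :: "bpoly set \<Rightarrow> bpoly set" where
  "hermitian_part A = {x\<in>A. pstar x = x}"

end

theory Submission
  imports Defs
begin

text \<open>Write \<open>G = J - \<mu>\<close>.  It suffices to find \<open>r < 0\<close> with \<open>r \<in> \<Sigma> + G B\<close>, where \<open>\<Sigma>\<close> is the cone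
  of Hermitian squares: after rescaling, \<open>-1 = c + q\<close> with \<open>c \<in> \<Sigma>\<close>, and \<open>q = -1 - c\<close> is Hermitian and
  lies in the left ideal generated by \<open>G\<close>.

  For the ladder operators \<open>u\<^sub>i = z\<^sub>i\<close> (resp. \<open>\<bar>z\<^sub>i\<close>) the map
  \<open>x \<mapsto> (\<Sum>\<^sub>i u\<^sub>i x u\<^sub>i\<^sup>*) (J + c)\<close> preserves \<open>\<Sigma>\<close>: \<open>\<Sum>\<^sub>j u\<^sub>j\<^sup>* u\<^sub>j\<close> is \<open>J\<close> plus a constant, and \<open>J\<close>
  commutes with homogeneous elements up to a scalar.  The same commutation turns \<open>J - (\<mu> \<mp> h)\<close> into
  \<open>J - \<mu>\<close>, and \<open>(J + a)(J + c) \<equiv> (\<mu> + a)(\<mu> + c)\<close> modulo \<open>J - \<mu>\<close>.  Hence a certificate \<open>r\<close> at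
  \<open>\<mu> - h\<close> yields \<open>r \<mu> (\<mu> + n h)\<close> at \<open>\<mu>\<close>, and one at \<open>\<mu> + h\<close> yields
  \<open>r (\<mu> + h)(\<mu> + (n + 1) h)\<close>.  Starting from \<open>r = 1\<close> this gives a negative value for
  \<open>-(n + 1) h < \<mu> < 0\<close> (the point \<open>n = 1\<close>, \<open>\<mu> = -h\<close> needs an explicit identity), and induction
  in steps of \<open>h\<close> keeps the sign negative exactly as long as \<open>\<mu>\<close> avoids the exceptional values.

  The Wick algebra identities are all verified in its faithful Fock representation.\<close>

section \<open>Combinatorics of multi-indices\<close>

text \<open>Weights for a single mode at occupation number \<open>A\<close>: \<open>pair_weight\<close> is the factor produced by
  letting \<open>z\<^sup>k\<^sup>b \<bar>z\<^sup>l\<^sup>b\<close> and then \<open>z\<^sup>k\<^sup>a \<bar>z\<^sup>l\<^sup>a\<close> act in the Fock representation below,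
  \<open>contraction_weight\<close> that of the \<open>m\<close>-fold contraction in their Wick product.\<close>

definition pair_weight :: "nat \<Rightarrow> nat \<Rightarrow> nat \<Rightarrow> nat \<Rightarrow> nat \<Rightarrow> complex" where
  "pair_weight A ka la kb lb = (if ka \<le> A \<and> kb \<le> A - ka + la
     then fact (A - ka + la) / fact (A - ka) * (fact (A - ka + la - kb + lb) / fact (A - ka + la - kb))
     else 0)"

definition contraction_weight :: "nat \<Rightarrow> nat \<Rightarrow> nat \<Rightarrow> nat \<Rightarrow> nat \<Rightarrow> nat \<Rightarrow> complex" where
  "contraction_weight A ka la kb lb m = (if ka + kb - m \<le> A
     then 1 / fact m * (fact la / fact (la - m)) * (fact kb / fact (kb - m))
          * (fact (A - (ka + kb - m) + (la - m + lb)) / fact (A - (ka + kb - m)))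
     else 0)"

lemma contraction_weight_eq_binomials:
  assumes m: "m \<le> la" "m \<le> kb" and kb: "kb \<le> B + la"
  shows "contraction_weight (ka + B) ka la kb lb m
    = fact (B + la - kb + lb) * fact kb / fact B * (of_nat (la choose m) * of_nat (B choose (kb - m)))"
proof (cases "kb - m \<le> B")
  case True
  have "(ka + kb - m \<le> ka + B) = True" "ka + B - (ka + kb - m) = B - (kb - m)"
    "B - (kb - m) + (la - m + lb) = B + la - kb + lb"
    using True m by auto
  moreover have "(of_nat (la choose m) :: complex) = fact la / (fact m * fact (la - m))"
    using m by (simp add: binomial_fact)
  moreover have "(of_nat (B choose (kb - m)) :: complex) = fact B / (fact (kb - m) * fact (B - (kb - m)))"
    using True by (simp add: binomial_fact)
  ultimately show ?thesis unfolding contraction_weight_def by (simp only: if_True) (simp add: field_simps)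
next
  case False
  then have "\<not> ka + kb - m \<le> ka + B" using m by arith
  then show ?thesis using False by (simp add: contraction_weight_def binomial_eq_0)
qed

text \<open>The one-mode Wick formula; it reduces to Vandermonde's convolution.\<close>

lemma pair_weight_eq_sum_contraction_weight:
  "pair_weight A ka la kb lb = (\<Sum>m\<le>min la kb. contraction_weight A ka la kb lb m)"
proof (cases "ka \<le> A \<and> kb \<le> A - ka + la")
  case False
  then have "\<forall>m\<in>{..min la kb}. \<not> ka + kb - m \<le> A" by auto
  then show ?thesis using False by (simp add: pair_weight_def contraction_weight_def)
next
  case True
  then obtain B where A: "A = ka + B" and kb: "kb \<le> B + la" using le_Suc_ex by force
  define C :: complex where "C = fact (B + la - kb + lb) * fact kb / fact B"
  have "(\<Sum>m\<le>min la kb. contraction_weight A ka la kb lb m)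
      = C * of_nat (\<Sum>m\<le>min la kb. (la choose m) * (B choose (kb - m)))"
    unfolding A C_def using kb by (simp add: contraction_weight_eq_binomials sum_distrib_left)
  also have "(\<Sum>m\<le>min la kb. (la choose m) * (B choose (kb - m))) = (\<Sum>m\<le>kb. (la choose m) * (B choose (kb - m)))"
    by (rule sum.mono_neutral_left) auto
  also have "\<dots> = (B + la) choose kb" by (subst vandermonde) (simp add: add.commute)
  also have "(of_nat ((B + la) choose kb) :: complex) = fact (B + la) / (fact kb * fact (B + la - kb))"
    using kb by (simp add: binomial_fact)
  finally show ?thesis using True kb unfolding A C_def pair_weight_def by (simp add: field_simps)
qed

definition idx_box :: "nat \<Rightarrow> midx \<Rightarrow> midx set" where
  "idx_box n U = {M. idx_ok n M \<and> (\<forall>i. M i \<le> U i)}"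

lemma idx_box_0: "idx_box 0 U = (\<lambda>k i. if i = 0 then k else 0) ` {..U 0}"
proof
  show "idx_box 0 U \<subseteq> (\<lambda>k i. if i = 0 then k else 0) ` {..U 0}"
  proof
    fix M assume "M \<in> idx_box 0 U"
    then have "M = (\<lambda>i. if i = 0 then M 0 else 0)" "M 0 \<le> U 0"
      by (auto simp: idx_box_def idx_ok_def fun_eq_iff)
    then show "M \<in> (\<lambda>k i. if i = 0 then k else 0) ` {..U 0}" by blast
  qed
qed (auto simp: idx_box_def idx_ok_def)

lemma idx_box_Suc: "idx_box (Suc n) U = (\<lambda>(M, k). M(Suc n := k)) ` (idx_box n U \<times> {..U (Suc n)})"
proof
  show "idx_box (Suc n) U \<subseteq> (\<lambda>(M, k). M(Suc n := k)) ` (idx_box n U \<times> {..U (Suc n)})"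
  proof
    fix M assume "M \<in> idx_box (Suc n) U"
    then have "M = (\<lambda>(M, k). M(Suc n := k)) (M(Suc n := 0), M (Suc n))"
      "(M(Suc n := 0), M (Suc n)) \<in> idx_box n U \<times> {..U (Suc n)}"
      by (auto simp: idx_box_def idx_ok_def fun_eq_iff)
    then show "M \<in> (\<lambda>(M, k). M(Suc n := k)) ` (idx_box n U \<times> {..U (Suc n)})" by blast
  qed
qed (auto simp: idx_box_def idx_ok_def)

lemma finite_idx_box: "finite (idx_box n U)"
  by (induction n) (auto simp: idx_box_0 idx_box_Suc)

lemma sum_idx_box_prod:
  fixes g :: "nat \<Rightarrow> nat \<Rightarrow> 'a::comm_semiring_1"
  shows "(\<Sum>M\<in>idx_box n U. \<Prod>i\<le>n. g i (M i)) = (\<Prod>i\<le>n. \<Sum>m\<le>U i. g i m)"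
proof (induction n)
  case 0
  have inj: "inj_on (\<lambda>k i. if i = 0 then k else 0) {..U 0}" by (auto simp: inj_on_def fun_eq_iff)
  show ?case unfolding idx_box_0 by (simp add: sum.reindex[OF inj])
next
  case (Suc n)
  have inj: "inj_on (\<lambda>(M, k). M(Suc n := k)) (idx_box n U \<times> {..U (Suc n)})"
  proof (rule inj_onI, clarify)
    fix M k M' k' assume "M \<in> idx_box n U" "M' \<in> idx_box n U" and e: "M(Suc n := k) = M'(Suc n := k')"
    then have "M (Suc n) = 0" "M' (Suc n) = 0" by (auto simp: idx_box_def idx_ok_def)
    with e show "M = M' \<and> k = k'" by (auto simp: fun_eq_iff) (metis fun_upd_apply)+
  qed
  have "(\<Sum>M\<in>idx_box (Suc n) U. \<Prod>i\<le>Suc n. g i (M i)) =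
      (\<Sum>(M, k)\<in>idx_box n U \<times> {..U (Suc n)}. \<Prod>i\<le>Suc n. g i ((M(Suc n := k)) i))"
    unfolding idx_box_Suc using sum.reindex[OF inj, of "\<lambda>M. \<Prod>i\<le>Suc n. g i (M i)"]
    by (simp add: comp_def case_prod_unfold)
  also have "\<dots> = (\<Sum>(M, k)\<in>idx_box n U \<times> {..U (Suc n)}. (\<Prod>i\<le>n. g i (M i)) * g (Suc n) k)"
    by (intro sum.cong refl) (auto simp: prod.atMost_Suc intro!: prod.cong)
  also have "\<dots> = (\<Sum>M\<in>idx_box n U. \<Prod>i\<le>n. g i (M i)) * (\<Sum>k\<le>U (Suc n). g (Suc n) k)"
    by (simp add: sum_product sum.cartesian_product)
  also have "\<dots> = (\<Prod>i\<le>Suc n. \<Sum>m\<le>U i. g i m)" by (simp add: Suc prod.atMost_Suc)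
  finally show ?case .
qed

lemma mdeg_add_diff:
  assumes "\<forall>i. M i \<le> L i"
  shows "mdeg n M + mdeg n (\<lambda>i. L i - M i + L' i) = mdeg n L + mdeg n L'"
proof -
  have "M i + (L i - M i + L' i) = L i + L' i" for i using assms[rule_format, of i] by simp
  then show ?thesis unfolding mdeg_def sum.distrib[symmetric] by (intro sum.cong) blast+
qed


section \<open>The Fock representation\<close>

definition polys :: "nat \<Rightarrow> bpoly set" where
  "polys n = {p. finite (supp p) \<and> (\<forall>c\<in>supp p. idx_ok n (fst c) \<and> idx_ok n (snd c))}"

definition contractions :: "nat \<Rightarrow> midx \<times> midx \<Rightarrow> midx \<times> midx \<Rightarrow> midx set" where
  "contractions n a b = {M. idx_ok n M \<and> (\<forall>i. M i \<le> snd a i \<and> M i \<le> fst b i)}"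

definition contraction_coeff :: "nat \<Rightarrow> real \<Rightarrow> midx \<times> midx \<Rightarrow> midx \<times> midx \<Rightarrow> midx \<Rightarrow> complex" where
  "contraction_coeff n h a b M =
     complex_of_real h ^ mdeg n M / mfact n M * dfactor n (snd a) M * dfactor n (fst b) M"

definition contract :: "midx \<times> midx \<Rightarrow> midx \<times> midx \<Rightarrow> midx \<Rightarrow> midx \<times> midx" where
  "contract a b M = ((\<lambda>i. fst a i + fst b i - M i), (\<lambda>i. snd a i - M i + snd b i))"

definition idx_le :: "nat \<Rightarrow> midx \<Rightarrow> midx \<Rightarrow> bool" where
  "idx_le n K A \<longleftrightarrow> (\<forall>i\<le>n. K i \<le> A i)"

definition shift_idx :: "midx \<Rightarrow> midx \<Rightarrow> midx \<Rightarrow> midx" where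
  "shift_idx K L A = (\<lambda>i. A i - K i + L i)"

text \<open>The monomial \<open>z\<^sup>K \<bar>z\<^sup>L\<close> acts on functions \<open>f\<close> of the occupation numbers \<open>A\<close>; for a single
  variable, \<open>z\<^sub>j\<close> sends \<open>f\<close> to \<open>A \<mapsto> f (A - e\<^sub>j)\<close> (and \<open>0\<close> if \<open>A\<^sub>j = 0\<close>), and \<open>\<bar>z\<^sub>j\<close> sends it to
  \<open>A \<mapsto> h (A\<^sub>j + 1) f (A + e\<^sub>j)\<close>.  For \<open>h > 0\<close> this is a faithful representation of the Wick
  product, from which all algebra laws are inherited.\<close>

definition fock_mon :: "nat \<Rightarrow> real \<Rightarrow> midx \<times> midx \<Rightarrow> (midx \<Rightarrow> complex) \<Rightarrow> midx \<Rightarrow> complex" where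
  "fock_mon n h c f A = (if idx_le n (fst c) A
     then complex_of_real h ^ mdeg n (snd c) * (\<Prod>i\<le>n. fact (A i - fst c i + snd c i) / fact (A i - fst c i))
          * f (shift_idx (fst c) (snd c) A)
     else 0)"

definition fock :: "nat \<Rightarrow> real \<Rightarrow> bpoly \<Rightarrow> (midx \<Rightarrow> complex) \<Rightarrow> midx \<Rightarrow> complex" where
  "fock n h p f A = (\<Sum>c\<in>supp p. p c * fock_mon n h c f A)"

lemma contractions_eq_idx_box: "contractions n (Ka, La) (Kb, Lb) = idx_box n (\<lambda>i. min (La i) (Kb i))"
  by (auto simp: contractions_def idx_box_def)

lemma finite_contractions: "finite (contractions n a b)"
  using finite_idx_box[of n "\<lambda>i. min (snd a i) (fst b i)"]
  by (cases a, cases b) (simp add: contractions_eq_idx_box)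

lemma fock_mon_fock_mon:
  "fock_mon n h (Ka, La) (fock_mon n h (Kb, Lb) f) A =
    complex_of_real h ^ (mdeg n La + mdeg n Lb) * (\<Prod>i\<le>n. pair_weight (A i) (Ka i) (La i) (Kb i) (Lb i))
    * f (shift_idx Kb Lb (shift_idx Ka La A))"
proof (cases "idx_le n Ka A \<and> idx_le n Kb (shift_idx Ka La A)")
  case True
  then have "(\<Prod>i\<le>n. pair_weight (A i) (Ka i) (La i) (Kb i) (Lb i)) =
      (\<Prod>i\<le>n. fact (A i - Ka i + La i) / fact (A i - Ka i)) *
      (\<Prod>i\<le>n. fact (A i - Ka i + La i - Kb i + Lb i) / fact (A i - Ka i + La i - Kb i))"
    by (auto simp: pair_weight_def idx_le_def shift_idx_def prod.distrib[symmetric] intro!: prod.cong)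
  then show ?thesis using True unfolding fock_mon_def by (simp add: shift_idx_def power_add)
next
  case False
  then obtain i where "i \<le> n" "\<not> (Ka i \<le> A i \<and> Kb i \<le> A i - Ka i + La i)"
    unfolding idx_le_def shift_idx_def by blast
  then have "(\<Prod>i\<le>n. pair_weight (A i) (Ka i) (La i) (Kb i) (Lb i)) = 0"
    by (intro prod_zero) (auto simp: pair_weight_def)
  then show ?thesis using False unfolding fock_mon_def by auto
qed

lemma contraction_coeff_fock_mon:
  assumes ok: "idx_ok n Ka" "idx_ok n Kb" "idx_ok n M" and M: "\<forall>i. M i \<le> La i" "\<forall>i. M i \<le> Kb i"
  shows "contraction_coeff n h (Ka, La) (Kb, Lb) M * fock_mon n h (contract (Ka, La) (Kb, Lb) M) f A =
    complex_of_real h ^ (mdeg n La + mdeg n Lb) * (\<Prod>i\<le>n. contraction_weight (A i) (Ka i) (La i) (Kb i) (Lb i) (M i))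
    * f (shift_idx Kb Lb (shift_idx Ka La A))"
proof (cases "idx_le n (\<lambda>i. Ka i + Kb i - M i) A")
  case True
  have "shift_idx (\<lambda>i. Ka i + Kb i - M i) (\<lambda>i. La i - M i + Lb i) A = shift_idx Kb Lb (shift_idx Ka La A)"
  proof
    fix i
    show "shift_idx (\<lambda>i. Ka i + Kb i - M i) (\<lambda>i. La i - M i + Lb i) A i = shift_idx Kb Lb (shift_idx Ka La A) i"
    proof (cases "i \<le> n")
      case True
      then have "Ka i + Kb i - M i \<le> A i" using \<open>idx_le n _ A\<close> by (auto simp: idx_le_def)
      then show ?thesis using M[rule_format, of i] by (simp add: shift_idx_def)
    qed (use ok in \<open>simp add: shift_idx_def idx_ok_def\<close>)
  qed
  moreover have "(\<Prod>i\<le>n. contraction_weight (A i) (Ka i) (La i) (Kb i) (Lb i) (M i)) =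
      (\<Prod>i\<le>n. 1 / fact (M i)) * (\<Prod>i\<le>n. fact (La i) / fact (La i - M i)) *
      (\<Prod>i\<le>n. fact (Kb i) / fact (Kb i - M i)) *
      (\<Prod>i\<le>n. fact (A i - (Ka i + Kb i - M i) + (La i - M i + Lb i)) / fact (A i - (Ka i + Kb i - M i)))"
    using True by (simp add: contraction_weight_def idx_le_def prod.distrib[symmetric])
  moreover have "complex_of_real h ^ mdeg n M * complex_of_real h ^ mdeg n (\<lambda>i. La i - M i + Lb i)
      = complex_of_real h ^ (mdeg n La + mdeg n Lb)"
    unfolding power_add[symmetric] using mdeg_add_diff[OF M(1)] by simp
  moreover have "(\<Prod>i\<le>n. 1 / fact (M i)) = 1 / mfact n M" unfolding mfact_def by (simp add: prod_dividef)
  ultimately show ?thesis using True unfolding contraction_coeff_def fock_mon_def contract_def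
    by (simp add: dfactor_def)
next
  case False
  then obtain i where "i \<le> n" "\<not> Ka i + Kb i - M i \<le> A i" by (auto simp: idx_le_def)
  then have "(\<Prod>i\<le>n. contraction_weight (A i) (Ka i) (La i) (Kb i) (Lb i) (M i)) = 0"
    by (intro prod_zero) (auto simp: contraction_weight_def)
  then show ?thesis using False unfolding fock_mon_def contract_def by simp
qed

lemma fock_mon_comp:
  assumes ok: "idx_ok n Ka" "idx_ok n Kb"
  shows "fock_mon n h (Ka, La) (fock_mon n h (Kb, Lb) f) A =
    (\<Sum>M\<in>contractions n (Ka, La) (Kb, Lb).
       contraction_coeff n h (Ka, La) (Kb, Lb) M * fock_mon n h (contract (Ka, La) (Kb, Lb) M) f A)"
proof -
  have "(\<Sum>M\<in>contractions n (Ka, La) (Kb, Lb).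
          contraction_coeff n h (Ka, La) (Kb, Lb) M * fock_mon n h (contract (Ka, La) (Kb, Lb) M) f A)
     = (\<Sum>M\<in>idx_box n (\<lambda>i. min (La i) (Kb i)).
          \<Prod>i\<le>n. contraction_weight (A i) (Ka i) (La i) (Kb i) (Lb i) (M i))
       * complex_of_real h ^ (mdeg n La + mdeg n Lb) * f (shift_idx Kb Lb (shift_idx Ka La A))"
    unfolding contractions_eq_idx_box sum_distrib_right
    using ok by (intro sum.cong refl) (simp add: contraction_coeff_fock_mon idx_box_def)
  also have "\<dots> = fock_mon n h (Ka, La) (fock_mon n h (Kb, Lb) f) A"
    by (simp add: sum_idx_box_prod[of "\<lambda>i. contraction_weight (A i) (Ka i) (La i) (Kb i) (Lb i)"]
        fock_mon_fock_mon pair_weight_eq_sum_contraction_weight)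
  finally show ?thesis ..
qed

lemma wick_expand:
  "wick n h p q c = (\<Sum>a\<in>supp p. \<Sum>b\<in>supp q. \<Sum>M\<in>contractions n a b.
     if c = contract a b M then p a * q b * contraction_coeff n h a b M else 0)"
proof -
  obtain K L where c: "c = (K, L)" by fastforce
  show ?thesis
    unfolding c wick_def contractions_def contract_def contraction_coeff_def case_prod_conv prod.inject
    by (intro sum.cong refl) (simp add: divide_inverse ac_simps)
qed

definition wick_support :: "nat \<Rightarrow> bpoly \<Rightarrow> bpoly \<Rightarrow> (midx \<times> midx) set" where
  "wick_support n p q = (\<Union>a\<in>supp p. \<Union>b\<in>supp q. contract a b ` contractions n a b)"

lemma polys_finite_supp: "p \<in> polys n \<Longrightarrow> finite (supp p)"
  by (simp add: polys_def)

lemma polys_idx_ok: "p \<in> polys n \<Longrightarrow> c \<in> supp p \<Longrightarrow> idx_ok n (fst c) \<and> idx_ok n (snd c)"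
  by (simp add: polys_def)

lemma finite_wick_support: "p \<in> polys n \<Longrightarrow> q \<in> polys n \<Longrightarrow> finite (wick_support n p q)"
  unfolding wick_support_def by (auto intro!: finite_imageI simp: finite_contractions polys_finite_supp)

lemma supp_wick_subset: "supp (wick n h p q) \<subseteq> wick_support n p q"
proof
  fix c assume c: "c \<in> supp (wick n h p q)"
  show "c \<in> wick_support n p q"
  proof (rule ccontr)
    assume "c \<notin> wick_support n p q"
    then have "\<forall>a\<in>supp p. \<forall>b\<in>supp q. \<forall>M\<in>contractions n a b. c \<noteq> contract a b M"
      unfolding wick_support_def by blast
    then have "wick n h p q c = 0" unfolding wick_expand by (auto intro!: sum.neutral)
    with c show False by (simp add: supp_def)
  qed
qed

lemma wick_polys [simp]:
  assumes p: "p \<in> polys n" and q: "q \<in> polys n"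
  shows "wick n h p q \<in> polys n"
proof -
  have ok: "idx_ok n (fst c) \<and> idx_ok n (snd c)" if "c \<in> wick_support n p q" for c
  proof -
    obtain a b M where a: "a \<in> supp p" and b: "b \<in> supp q" and M: "M \<in> contractions n a b"
      and c: "c = contract a b M"
      using \<open>c \<in> wick_support n p q\<close> unfolding wick_support_def by blast
    show ?thesis using polys_idx_ok[OF p a] polys_idx_ok[OF q b] M unfolding c
      by (auto simp: contract_def idx_ok_def contractions_def)
  qed
  moreover have "finite (supp (wick n h p q))"
    by (rule finite_subset[OF supp_wick_subset finite_wick_support[OF p q]])
  ultimately show ?thesis using supp_wick_subset unfolding polys_def by blast
qed

lemma fock_superset: "finite S \<Longrightarrow> supp p \<subseteq> S \<Longrightarrow> fock n h p f A = (\<Sum>c\<in>S. p c * fock_mon n h c f A)"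
  unfolding fock_def by (rule sum.mono_neutral_left) (auto simp: supp_def)

lemma fock_mon_sum: "fock_mon n h c (\<lambda>B. \<Sum>k\<in>S. g k B) A = (\<Sum>k\<in>S. fock_mon n h c (g k) A)"
  unfolding fock_mon_def by (simp add: sum_distrib_left)

lemma fock_mon_add: "fock_mon n h c (\<lambda>B. f B + g B) A = fock_mon n h c f A + fock_mon n h c g A"
  unfolding fock_mon_def by (simp add: algebra_simps)

lemma fock_mon_mult: "fock_mon n h c (\<lambda>B. x * g B) A = x * fock_mon n h c g A"
  unfolding fock_mon_def by (simp add: algebra_simps)

lemma fock_wick_expand:
  assumes p: "p \<in> polys n" and q: "q \<in> polys n"
  shows "fock n h (wick n h p q) f A = (\<Sum>a\<in>supp p. \<Sum>b\<in>supp q. \<Sum>M\<in>contractions n a b.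
    p a * q b * contraction_coeff n h a b M * fock_mon n h (contract a b M) f A)"
proof -
  let ?S = "wick_support n p q"
  let ?F = "\<lambda>a b M. p a * q b * contraction_coeff n h a b M * fock_mon n h (contract a b M) f A"
  have "fock n h (wick n h p q) f A = (\<Sum>c\<in>?S. wick n h p q c * fock_mon n h c f A)"
    by (rule fock_superset[OF finite_wick_support[OF p q] supp_wick_subset])
  also have "\<dots> = (\<Sum>c\<in>?S. \<Sum>a\<in>supp p. \<Sum>b\<in>supp q. \<Sum>M\<in>contractions n a b.
      if c = contract a b M then ?F a b M else 0)"
    unfolding wick_expand sum_distrib_right by (intro sum.cong refl) auto
  also have "\<dots> = (\<Sum>a\<in>supp p. \<Sum>b\<in>supp q. \<Sum>M\<in>contractions n a b. \<Sum>c\<in>?S.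
      if c = contract a b M then ?F a b M else 0)"
    by (subst sum.swap, rule sum.cong[OF refl], subst sum.swap, rule sum.cong[OF refl], rule sum.swap)
  also have "\<dots> = (\<Sum>a\<in>supp p. \<Sum>b\<in>supp q. \<Sum>M\<in>contractions n a b. ?F a b M)"
  proof (intro sum.cong refl)
    fix a b M assume "a \<in> supp p" "b \<in> supp q" "M \<in> contractions n a b"
    then have "contract a b M \<in> ?S" unfolding wick_support_def by blast
    then show "(\<Sum>c\<in>?S. if c = contract a b M then ?F a b M else 0) = ?F a b M"
      using finite_wick_support[OF p q] by simp
  qed
  finally show ?thesis .
qed

lemma fock_wick:
  assumes p: "p \<in> polys n" and q: "q \<in> polys n"
  shows "fock n h (wick n h p q) f = fock n h p (fock n h q f)"
proof
  fix A
  have "fock n h (wick n h p q) f A = (\<Sum>a\<in>supp p. \<Sum>b\<in>supp q. p a * q b * fock_mon n h a (fock_mon n h b f) A)"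
    unfolding fock_wick_expand[OF p q]
  proof (intro sum.cong refl)
    fix a b assume a: "a \<in> supp p" and b: "b \<in> supp q"
    obtain Ka La Kb Lb where ab: "a = (Ka, La)" "b = (Kb, Lb)" by fastforce
    have ok: "idx_ok n Ka" "idx_ok n Kb" using polys_idx_ok[OF p a] polys_idx_ok[OF q b] ab by auto
    show "(\<Sum>M\<in>contractions n a b. p a * q b * contraction_coeff n h a b M * fock_mon n h (contract a b M) f A)
        = p a * q b * fock_mon n h a (fock_mon n h b f) A"
      unfolding ab fock_mon_comp[OF ok] by (simp add: sum_distrib_left mult.assoc)
  qed
  also have "\<dots> = fock n h p (fock n h q f) A"
    unfolding fock_def fock_mon_sum fock_mon_mult by (simp add: sum_distrib_left mult.assoc)
  finally show "fock n h (wick n h p q) f A = fock n h p (fock n h q f) A" .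
qed

definition pzero :: bpoly where
  "pzero = (\<lambda>_. 0)"

definition psum :: "'k set \<Rightarrow> ('k \<Rightarrow> bpoly) \<Rightarrow> bpoly" where
  "psum S F = (\<lambda>c. \<Sum>k\<in>S. F k c)"

lemma psmult_psmult: "psmult x (psmult y p) = psmult (x * y) p"
  by (simp add: psmult_def mult.assoc)

lemma psmult_padd: "psmult x (padd p q) = padd (psmult x p) (psmult x q)"
  by (simp add: psmult_def padd_def distrib_left)

lemma psum_cong [cong]: "S = S' \<Longrightarrow> (\<And>k. k \<in> S' =simp=> F k = F' k) \<Longrightarrow> psum S F = psum S' F'"
  unfolding psum_def simp_implies_def by (intro ext sum.cong) auto

lemma psum_pzero [simp]: "psum S (\<lambda>_. pzero) = pzero"
  by (simp add: psum_def pzero_def)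

lemma psum_padd: "psum S (\<lambda>k. padd (F k) (G k)) = padd (psum S F) (psum S G)"
  by (simp add: psum_def padd_def sum.distrib fun_eq_iff)

lemma psum_psmult: "psum S (\<lambda>k. psmult x (F k)) = psmult x (psum S F)"
  by (simp add: psum_def psmult_def sum_distrib_left)

lemma supp_padd: "supp (padd p q) \<subseteq> supp p \<union> supp q"
  by (auto simp: supp_def padd_def)

lemma supp_psmult: "supp (psmult x p) \<subseteq> supp p"
  by (auto simp: supp_def psmult_def)

lemma supp_psum: "supp (psum S F) \<subseteq> (\<Union>k\<in>S. supp (F k))"
proof
  fix c assume "c \<in> supp (psum S F)"
  then have "(\<Sum>k\<in>S. F k c) \<noteq> 0" by (simp add: supp_def psum_def)
  then obtain k where "k \<in> S" "F k c \<noteq> 0" by (meson sum.neutral)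
  then show "c \<in> (\<Union>k\<in>S. supp (F k))" by (auto simp: supp_def)
qed

lemma supp_punit: "supp punit = {(\<lambda>_. 0, \<lambda>_. 0)}"
  by (auto simp: supp_def punit_def split: if_splits)

lemma polys_subset: "q \<in> polys n \<Longrightarrow> supp p \<subseteq> supp q \<Longrightarrow> p \<in> polys n"
  unfolding polys_def by (auto intro: finite_subset)

lemma padd_polys [simp]: "p \<in> polys n \<Longrightarrow> q \<in> polys n \<Longrightarrow> padd p q \<in> polys n"
  using supp_padd[of p q] unfolding polys_def by (auto intro: finite_subset)

lemma psmult_polys [simp]: "p \<in> polys n \<Longrightarrow> psmult x p \<in> polys n"
  using polys_subset supp_psmult by blast

lemma pzero_polys [simp]: "pzero \<in> polys n"
  by (simp add: polys_def pzero_def supp_def)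

lemma psum_polys [simp]:
  assumes "finite S" and "\<forall>k\<in>S. F k \<in> polys n"
  shows "psum S F \<in> polys n"
proof -
  have "finite (supp (psum S F))"
    using assms by (intro finite_subset[OF supp_psum]) (auto simp: polys_finite_supp)
  moreover have "\<forall>c\<in>supp (psum S F). idx_ok n (fst c) \<and> idx_ok n (snd c)"
    using supp_psum[of S F] assms polys_idx_ok by blast
  ultimately show ?thesis by (simp add: polys_def)
qed

lemma punit_polys [simp]: "punit \<in> polys n"
  by (simp add: polys_def supp_punit idx_ok_def)

lemma fock_padd: "p \<in> polys n \<Longrightarrow> q \<in> polys n \<Longrightarrow> fock n h (padd p q) f = (\<lambda>A. fock n h p f A + fock n h q f A)"
proof
  fix A assume p: "p \<in> polys n" and q: "q \<in> polys n"
  have fin: "finite (supp p \<union> supp q)" using p q by (simp add: polys_finite_supp)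
  show "fock n h (padd p q) f A = fock n h p f A + fock n h q f A"
    unfolding fock_superset[OF fin supp_padd] fock_superset[OF fin Un_upper1[of "supp p"]]
      fock_superset[OF fin Un_upper2[of "supp q"]]
    by (simp add: padd_def sum.distrib algebra_simps)
qed

lemma fock_psmult: "p \<in> polys n \<Longrightarrow> fock n h (psmult x p) f = (\<lambda>A. x * fock n h p f A)"
  by (rule ext, subst fock_superset[OF polys_finite_supp supp_psmult])
    (simp_all add: fock_def psmult_def sum_distrib_left mult.assoc)

lemma fock_pzero: "fock n h pzero f = (\<lambda>A. 0)"
  unfolding fock_def pzero_def supp_def by simp

lemma fock_psum:
  assumes S: "finite S" and F: "\<forall>k\<in>S. F k \<in> polys n"
  shows "fock n h (psum S F) f = (\<lambda>A. \<Sum>k\<in>S. fock n h (F k) f A)"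
proof
  fix A
  let ?U = "\<Union>k\<in>S. supp (F k)"
  have fin: "finite ?U" using S F polys_finite_supp by blast
  have "fock n h (psum S F) f A = (\<Sum>c\<in>?U. psum S F c * fock_mon n h c f A)"
    by (rule fock_superset[OF fin supp_psum])
  also have "\<dots> = (\<Sum>k\<in>S. \<Sum>c\<in>?U. F k c * fock_mon n h c f A)"
    unfolding psum_def sum_distrib_right by (rule sum.swap)
  also have "\<dots> = (\<Sum>k\<in>S. fock n h (F k) f A)"
    using fin by (intro sum.cong refl fock_superset[symmetric]) auto
  finally show "fock n h (psum S F) f A = (\<Sum>k\<in>S. fock n h (F k) f A)" .
qed

lemma fock_punit: "fock n h punit f = f"
proof
  fix A
  have "shift_idx (\<lambda>_. 0) (\<lambda>_. 0) A = A" by (simp add: shift_idx_def)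
  then show "fock n h punit f A = f A"
    unfolding fock_def supp_punit by (simp add: punit_def fock_mon_def idx_le_def mdeg_def)
qed

lemma fock_fun_add: "fock n h p (\<lambda>B. f B + g B) = (\<lambda>A. fock n h p f A + fock n h p g A)"
  unfolding fock_def fock_mon_add by (simp add: sum.distrib algebra_simps)

lemma fock_fun_mult: "fock n h p (\<lambda>B. x * f B) = (\<lambda>A. x * fock n h p f A)"
  unfolding fock_def fock_mon_mult by (simp add: sum_distrib_left algebra_simps)

lemma fock_fun_sum: "fock n h p (\<lambda>B. \<Sum>k\<in>S. g k B) = (\<lambda>A. \<Sum>k\<in>S. fock n h p (g k) A)"
  unfolding fock_def fock_mon_sum by (simp add: sum_distrib_left sum.swap[of _ S])

lemma fock_fun_zero: "fock n h p (\<lambda>B. 0) = (\<lambda>A. 0)"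
  using fock_fun_mult[of n h p 0 "\<lambda>_. 0"] by simp

lemmas fock_simps = fock_wick fock_padd fock_psmult fock_pzero fock_punit fock_psum
  fock_fun_add fock_fun_mult fock_fun_sum fock_fun_zero

lemma fock_mon_indicator_nonzero:
  assumes ok: "idx_ok n K" "idx_ok n L" "idx_ok n K'" "idx_ok n L'" and deg: "mdeg n L \<le> mdeg n L'"
    and nz: "fock_mon n h (K', L') (\<lambda>B. if B = L then 1 else 0) K \<noteq> 0"
  shows "K' = K \<and> L' = L"
proof -
  from nz have le: "idx_le n K' K" and sh: "shift_idx K' L' K = L"
    by (auto simp: fock_mon_def split: if_splits)
  have shi: "K i - K' i + L' i = L i" for i using fun_cong[OF sh, of i] by (simp add: shift_idx_def)
  have L'L: "L' i \<le> L i" if "i \<le> n" for i using shi[of i] by arith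
  then have "mdeg n L' \<le> mdeg n L" unfolding mdeg_def by (intro sum_mono) simp
  with deg have "mdeg n L' = mdeg n L" by simp
  then have eqL: "L' i = L i" if "i \<le> n" for i
    using sum_mono_inv[of L' "{..n}" L i] L'L that unfolding mdeg_def by auto
  have eqK: "K' i = K i" if "i \<le> n" for i
  proof -
    have "K' i \<le> K i" using le that by (simp add: idx_le_def)
    then show ?thesis using shi[of i] eqL[OF that] by arith
  qed
  have "K' i = K i \<and> L' i = L i" for i
    using eqK[of i] eqL[of i] ok by (cases "i \<le> n") (auto simp: idx_ok_def)
  then show ?thesis by auto
qed

text \<open>Faithfulness: test \<open>p\<close> on the indicator of \<open>L\<close> at \<open>A = K\<close>, where \<open>(K, L)\<close> is a monomial
  of \<open>p\<close> with \<open>|L|\<close> minimal; every other monomial of \<open>p\<close> contributes zero.\<close>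

lemma fock_eq_zero_imp_pzero:
  assumes p: "p \<in> polys n" and h: "h > 0" and zero: "\<And>f. fock n h p f = (\<lambda>A. 0)"
  shows "p = pzero"
proof (rule ccontr)
  assume "p \<noteq> pzero"
  then have ne: "supp p \<noteq> {}" by (auto simp: supp_def pzero_def fun_eq_iff)
  have fin: "finite (supp p)" using p by (simp add: polys_finite_supp)
  define d where "d = Min ((\<lambda>c. mdeg n (snd c)) ` supp p)"
  have "d \<in> (\<lambda>c. mdeg n (snd c)) ` supp p" unfolding d_def using fin ne by (intro Min_in) auto
  then obtain K L where KL: "(K, L) \<in> supp p" "mdeg n L = d" by auto
  have min: "d \<le> mdeg n (snd c)" if "c \<in> supp p" for c unfolding d_def using fin that by (intro Min_le) auto
  have okKL: "idx_ok n K" "idx_ok n L" using polys_idx_ok[OF p KL(1)] by auto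
  define f where "f = (\<lambda>B. if B = L then 1 else (0::complex))"
  have "p c * fock_mon n h c f K = 0" if c: "c \<in> supp p - {(K, L)}" for c
  proof (rule ccontr)
    obtain K' L' where cc: "c = (K', L')" by fastforce
    assume "p c * fock_mon n h c f K \<noteq> 0"
    moreover have "idx_ok n K'" "idx_ok n L'" using polys_idx_ok[OF p, of c] c cc by auto
    moreover have "mdeg n L \<le> mdeg n L'" using min[of c] c cc KL(2) by auto
    ultimately have "K' = K \<and> L' = L"
      using okKL unfolding cc f_def by (intro fock_mon_indicator_nonzero) auto
    with c cc show False by simp
  qed
  then have "fock n h p f K = p (K, L) * fock_mon n h (K, L) f K"
    unfolding fock_def using fin KL(1) by (simp add: sum.remove sum.neutral)
  also have "\<dots> = p (K, L) * (complex_of_real h ^ mdeg n L * (\<Prod>i\<le>n. fact (L i)))"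
    by (simp add: fock_mon_def shift_idx_def idx_le_def f_def)
  finally have "fock n h p f K = \<dots>" .
  moreover have "p (K, L) \<noteq> 0" using KL(1) by (simp add: supp_def)
  moreover have "(\<Prod>i\<le>n. fact (L i) :: complex) \<noteq> 0" by (simp add: prod_zero_iff)
  ultimately have "fock n h p f K \<noteq> 0" using h by simp
  with zero show False by simp
qed

lemma fock_inj:
  assumes p: "p \<in> polys n" and q: "q \<in> polys n" and h: "h > 0"
    and eq: "\<And>f. fock n h p f = fock n h q f"
  shows "p = q"
proof -
  have "padd p (psmult (-1) q) = pzero"
    using p q by (intro fock_eq_zero_imp_pzero[of _ n, OF _ h]) (simp_all add: fock_padd fock_psmult eq)
  then show ?thesis by (auto simp: padd_def psmult_def pzero_def fun_eq_iff)
qed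


locale wick_algebra =
  fixes n :: nat and h :: real
  assumes h_pos: "h > 0"
begin

abbreviation wick_prod :: "bpoly \<Rightarrow> bpoly \<Rightarrow> bpoly" (infixl "\<star>" 70) where
  "p \<star> q \<equiv> wick n h p q"

lemma polys_eqI: "p \<in> polys n \<Longrightarrow> q \<in> polys n \<Longrightarrow> (\<And>f. fock n h p f = fock n h q f) \<Longrightarrow> p = q"
  using fock_inj h_pos by blast

lemma wick_assoc: "p \<in> polys n \<Longrightarrow> q \<in> polys n \<Longrightarrow> r \<in> polys n \<Longrightarrow> (p \<star> q) \<star> r = p \<star> (q \<star> r)"
  by (rule polys_eqI) (simp_all add: fock_simps)

lemma wick_padd_left:
  "p \<in> polys n \<Longrightarrow> q \<in> polys n \<Longrightarrow> r \<in> polys n \<Longrightarrow> padd p q \<star> r = padd (p \<star> r) (q \<star> r)"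
  by (rule polys_eqI) (simp_all add: fock_simps)

lemma wick_padd_right:
  "p \<in> polys n \<Longrightarrow> q \<in> polys n \<Longrightarrow> r \<in> polys n \<Longrightarrow> r \<star> padd p q = padd (r \<star> p) (r \<star> q)"
  by (rule polys_eqI) (simp_all add: fock_simps)

lemma wick_psmult_left: "p \<in> polys n \<Longrightarrow> q \<in> polys n \<Longrightarrow> psmult x p \<star> q = psmult x (p \<star> q)"
  by (rule polys_eqI) (simp_all add: fock_simps)

lemma wick_psmult_right: "p \<in> polys n \<Longrightarrow> q \<in> polys n \<Longrightarrow> p \<star> psmult x q = psmult x (p \<star> q)"
  by (rule polys_eqI) (simp_all add: fock_simps)

lemma wick_punit_left: "p \<in> polys n \<Longrightarrow> punit \<star> p = p"
  by (rule polys_eqI) (simp_all add: fock_simps)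

lemma wick_punit_right: "p \<in> polys n \<Longrightarrow> p \<star> punit = p"
  by (rule polys_eqI) (simp_all add: fock_simps)

lemma wick_pzero_left: "p \<in> polys n \<Longrightarrow> pzero \<star> p = pzero"
  by (rule polys_eqI) (simp_all add: fock_simps)

lemma wick_pzero_right: "p \<in> polys n \<Longrightarrow> p \<star> pzero = pzero"
  by (rule polys_eqI) (simp_all add: fock_simps)

lemma wick_psum_left:
  "finite S \<Longrightarrow> \<forall>k\<in>S. F k \<in> polys n \<Longrightarrow> r \<in> polys n \<Longrightarrow> psum S F \<star> r = psum S (\<lambda>k. F k \<star> r)"
  by (rule polys_eqI) (simp_all add: fock_simps)

lemma wick_psum_right:
  "finite S \<Longrightarrow> \<forall>k\<in>S. F k \<in> polys n \<Longrightarrow> r \<in> polys n \<Longrightarrow> r \<star> psum S F = psum S (\<lambda>k. r \<star> F k)"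
  by (rule polys_eqI) (simp_all add: fock_simps)

end

lemma supp_pstar: "supp (pstar p) = prod.swap ` supp p"
  by (auto simp: supp_def pstar_def image_iff)

lemma pstar_polys [simp]: "p \<in> polys n \<Longrightarrow> pstar p \<in> polys n"
  by (auto simp: polys_def supp_pstar)

lemma pstar_pstar [simp]: "pstar (pstar p) = p"
  by (simp add: pstar_def)

lemma pstar_padd: "pstar (padd p q) = padd (pstar p) (pstar q)"
  by (simp add: pstar_def padd_def fun_eq_iff)

lemma pstar_psmult: "pstar (psmult x p) = psmult (cnj x) (pstar p)"
  by (simp add: pstar_def psmult_def fun_eq_iff)

lemma pstar_punit [simp]: "pstar punit = punit"
  by (auto simp: pstar_def punit_def fun_eq_iff)

lemma pstar_pzero [simp]: "pstar pzero = pzero"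
  by (auto simp: pstar_def pzero_def)

lemma contractions_swap: "contractions n (prod.swap b) (prod.swap a) = contractions n a b"
  by (auto simp: contractions_def)

lemma contract_swap:
  "M \<in> contractions n a b \<Longrightarrow> contract (prod.swap b) (prod.swap a) M = prod.swap (contract a b M)"
  by (auto simp: contractions_def contract_def fun_eq_iff)

lemma contraction_coeff_swap: "contraction_coeff n h (prod.swap b) (prod.swap a) M = contraction_coeff n h a b M"
  by (simp add: contraction_coeff_def)

lemma cnj_contraction_coeff: "cnj (contraction_coeff n h a b M) = contraction_coeff n h a b M"
  by (simp add: contraction_coeff_def mfact_def dfactor_def)

lemma pstar_swap: "pstar p (prod.swap c) = cnj (p c)"
  by (cases c) (simp add: pstar_def)

lemma pstar_wick: "pstar (wick n h p q) = wick n h (pstar q) (pstar p)"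
proof (rule ext, clarify)
  fix K L
  have inj: "inj_on prod.swap X" for X :: "(midx \<times> midx) set" by (metis inj_on_def swap_swap)
  have "wick n h (pstar q) (pstar p) (K, L) =
    (\<Sum>b\<in>supp q. \<Sum>a\<in>supp p. \<Sum>M\<in>contractions n (prod.swap b) (prod.swap a).
       if (K, L) = contract (prod.swap b) (prod.swap a) M
       then pstar q (prod.swap b) * pstar p (prod.swap a) * contraction_coeff n h (prod.swap b) (prod.swap a) M
       else 0)"
    unfolding wick_expand supp_pstar by (simp add: sum.reindex[OF inj])
  also have "\<dots> = (\<Sum>b\<in>supp q. \<Sum>a\<in>supp p. \<Sum>M\<in>contractions n a b.
       if (L, K) = contract a b M then cnj (p a * q b * contraction_coeff n h a b M) else 0)"
  proof -
    have "((K, L) = prod.swap c) = ((L, K) = c)" for c by (cases c) auto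
    then show ?thesis
      by (intro sum.cong refl)
        (simp_all add: contractions_swap contract_swap contraction_coeff_swap cnj_contraction_coeff
          pstar_swap mult.commute)
  qed
  also have "\<dots> = pstar (wick n h p q) (K, L)"
    unfolding pstar_def wick_expand by (subst sum.swap) (auto simp: if_distrib[of cnj] intro!: sum.cong)
  finally show "pstar (wick n h p q) (K, L) = wick n h (pstar q) (pstar p) (K, L)" ..
qed

section \<open>The generators \<open>z\<^sub>j\<close>, \<open>\<bar>z\<^sub>j\<close> and \<open>J\<close>\<close>

definition pmon :: "midx \<times> midx \<Rightarrow> bpoly" where
  "pmon c = (\<lambda>x. if x = c then 1 else 0)"

definition zvar :: "nat \<Rightarrow> bpoly" where
  "zvar j = pmon (unitidx j, \<lambda>_. 0)"

definition zbar :: "nat \<Rightarrow> bpoly" where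
  "zbar j = pmon (\<lambda>_. 0, unitidx j)"

lemma supp_pmon: "supp (pmon c) = {c}"
  by (auto simp: supp_def pmon_def)

lemma pmon_polys: "idx_ok n (fst c) \<Longrightarrow> idx_ok n (snd c) \<Longrightarrow> pmon c \<in> polys n"
  by (simp add: polys_def supp_pmon)

lemma fock_pmon: "fock n h (pmon c) f = fock_mon n h c f"
  unfolding fock_def supp_pmon by (simp add: pmon_def)

lemma idx_ok_unitidx: "j \<le> n \<Longrightarrow> idx_ok n (unitidx j)"
  by (simp add: idx_ok_def unitidx_def)

lemma mdeg_unitidx: "j \<le> n \<Longrightarrow> mdeg n (unitidx j) = 1"
  by (simp add: mdeg_def unitidx_def)

lemma mdeg_zero [simp]: "mdeg n (\<lambda>_. 0) = 0"
  by (simp add: mdeg_def)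

lemma zvar_polys [simp]: "j \<le> n \<Longrightarrow> zvar j \<in> polys n"
  unfolding zvar_def by (rule pmon_polys) (auto simp: idx_ok_def unitidx_def)

lemma zbar_polys [simp]: "j \<le> n \<Longrightarrow> zbar j \<in> polys n"
  unfolding zbar_def by (rule pmon_polys) (auto simp: idx_ok_def unitidx_def)

lemma punit_eq_pmon: "punit = pmon (\<lambda>_. 0, \<lambda>_. 0)"
  by (auto simp: punit_def pmon_def fun_eq_iff)

lemma pstar_pmon: "pstar (pmon c) = pmon (prod.swap c)"
  by (cases c) (auto simp: pstar_def pmon_def fun_eq_iff)

lemma pstar_zvar [simp]: "pstar (zvar j) = zbar j"
  by (simp add: zvar_def zbar_def pstar_pmon)

lemma pstar_zbar [simp]: "pstar (zbar j) = zvar j"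
  by (simp add: zvar_def zbar_def pstar_pmon)

lemma Jpoly_eq_psum_pmon: "Jpoly n = psum {..n} (\<lambda>j. pmon (unitidx j, unitidx j))"
proof (rule ext, clarify)
  fix K L
  have unitidx_inj: "unitidx i = unitidx j \<Longrightarrow> i = j" for i j
    by (metis unitidx_def zero_neq_one)
  show "Jpoly n (K, L) = psum {..n} (\<lambda>j. pmon (unitidx j, unitidx j)) (K, L)"
  proof (cases "\<exists>j\<le>n. K = unitidx j \<and> L = unitidx j")
    case True
    then obtain j where j: "j \<le> n" "K = unitidx j" "L = unitidx j" by blast
    have "psum {..n} (\<lambda>j. pmon (unitidx j, unitidx j)) (K, L) = (\<Sum>k\<le>n. if k = j then 1 else 0)"
      unfolding psum_def pmon_def using j by (intro sum.cong refl) (auto dest: unitidx_inj)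
    then show ?thesis using True j by (simp add: Jpoly_def)
  next
    case False
    then show ?thesis by (auto simp: Jpoly_def psum_def pmon_def intro!: sum.neutral)
  qed
qed

lemma Jpoly_polys [simp]: "Jpoly n \<in> polys n"
  unfolding Jpoly_eq_psum_pmon by (auto intro!: psum_polys pmon_polys simp: idx_ok_unitidx)

lemma fock_zvar:
  assumes "j \<le> n"
  shows "fock n h (zvar j) f = (\<lambda>A. if A j = 0 then 0 else f (A(j := A j - 1)))"
proof
  fix A
  have "idx_le n (unitidx j) A = (A j \<noteq> 0)" using assms by (auto simp: idx_le_def unitidx_def)
  moreover have "shift_idx (unitidx j) (\<lambda>_. 0) A = A(j := A j - 1)"
    by (auto simp: shift_idx_def unitidx_def)
  ultimately show "fock n h (zvar j) f A = (if A j = 0 then 0 else f (A(j := A j - 1)))"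
    by (simp add: zvar_def fock_pmon fock_mon_def mdeg_def)
qed

lemma fock_zbar:
  assumes "j \<le> n"
  shows "fock n h (zbar j) f = (\<lambda>A. of_real h * of_nat (Suc (A j)) * f (A(j := Suc (A j))))"
proof
  fix A
  have "(\<Prod>i\<le>n. fact (A i + unitidx j i) / fact (A i) :: complex) = (\<Prod>i\<le>n. if i = j then of_nat (Suc (A j)) else 1)"
    by (intro prod.cong refl) (auto simp: unitidx_def fact_Suc)
  also have "\<dots> = of_nat (Suc (A j))" using assms by simp
  finally have "(\<Prod>i\<le>n. fact (A i + unitidx j i) / fact (A i) :: complex) = of_nat (Suc (A j))" .
  moreover have "shift_idx (\<lambda>_. 0) (unitidx j) A = A(j := Suc (A j))"
    by (auto simp: shift_idx_def unitidx_def)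
  ultimately show "fock n h (zbar j) f A = of_real h * of_nat (Suc (A j)) * f (A(j := Suc (A j)))"
    using assms by (simp add: zbar_def fock_pmon fock_mon_def idx_le_def mdeg_unitidx)
qed

lemma fock_pmon_number:
  assumes "j \<le> n"
  shows "fock n h (pmon (unitidx j, unitidx j)) f = (\<lambda>A. of_real h * of_nat (A j) * f A)"
proof
  fix A
  show "fock n h (pmon (unitidx j, unitidx j)) f A = of_real h * of_nat (A j) * f A"
  proof (cases "A j = 0")
    case False
    have "(\<Prod>i\<le>n. fact (A i - unitidx j i + unitidx j i) / fact (A i - unitidx j i) :: complex)
        = (\<Prod>i\<le>n. if i = j then of_nat (A j) else 1)"
      using False by (intro prod.cong refl) (auto simp: unitidx_def fact_reduce)
    also have "\<dots> = of_nat (A j)" using assms by simp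
    finally have "(\<Prod>i\<le>n. fact (A i - unitidx j i + unitidx j i) / fact (A i - unitidx j i) :: complex) = of_nat (A j)" .
    moreover have "shift_idx (unitidx j) (unitidx j) A = A"
      using False by (auto simp: shift_idx_def unitidx_def)
    moreover have "idx_le n (unitidx j) A" using False by (auto simp: idx_le_def unitidx_def)
    ultimately show ?thesis using assms by (simp add: fock_pmon fock_mon_def mdeg_unitidx)
  qed (auto simp: fock_pmon fock_mon_def idx_le_def unitidx_def assms)
qed

lemma fock_Jpoly: "fock n h (Jpoly n) f = (\<lambda>A. of_real h * of_nat (mdeg n A) * f A)"
  unfolding Jpoly_eq_psum_pmon
  by (subst fock_psum) (auto intro!: pmon_polys simp: idx_ok_unitidx fock_pmon_number mdeg_def
      sum_distrib_left sum_distrib_right)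

context wick_algebra
begin

lemma wick_zbar_zvar:
  assumes "i \<le> n" "j \<le> n"
  shows "zbar i \<star> zvar j = padd (zvar j \<star> zbar i) (psmult (if i = j then of_real h else 0) punit)"
proof (rule polys_eqI)
  fix f
  show "fock n h (zbar i \<star> zvar j) f = fock n h (padd (zvar j \<star> zbar i) (psmult (if i = j then of_real h else 0) punit)) f"
    using assms by (auto simp: fock_simps fock_zvar fock_zbar fun_upd_twist algebra_simps fun_eq_iff)
qed (use assms in simp_all)

lemma wick_zvar_commute: "i \<le> n \<Longrightarrow> j \<le> n \<Longrightarrow> zvar i \<star> zvar j = zvar j \<star> zvar i"
  by (rule polys_eqI) (auto simp: fock_simps fock_zvar fun_upd_twist fun_eq_iff)

lemma wick_zbar_commute: "i \<le> n \<Longrightarrow> j \<le> n \<Longrightarrow> zbar i \<star> zbar j = zbar j \<star> zbar i"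
  by (rule polys_eqI) (auto simp: fock_simps fock_zbar fun_upd_twist fun_eq_iff)

lemma wick_zvar_zbar: "j \<le> n \<Longrightarrow> zvar j \<star> zbar j = pmon (unitidx j, unitidx j)"
  by (rule polys_eqI) (auto simp: fock_simps fock_zvar fock_zbar fock_pmon_number fun_eq_iff
      pmon_polys idx_ok_unitidx)

lemma Jpoly_eq_psum_wick: "Jpoly n = psum {..n} (\<lambda>j. zvar j \<star> zbar j)"
  unfolding Jpoly_eq_psum_pmon psum_def by (rule ext) (rule sum.cong, simp_all add: wick_zvar_zbar)

end


section \<open>Grading by \<open>|L| - |K|\<close>\<close>

definition hom_deg :: "nat \<Rightarrow> int \<Rightarrow> bpoly \<Rightarrow> bool" where
  "hom_deg n d p \<longleftrightarrow> (\<forall>c\<in>supp p. int (mdeg n (snd c)) = int (mdeg n (fst c)) + d)"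

lemma Balg_iff: "p \<in> Balg n \<longleftrightarrow> p \<in> polys n \<and> hom_deg n 0 p"
  by (auto simp: Balg_def polys_def hom_deg_def supp_def)

lemma Balg_polys: "p \<in> Balg n \<Longrightarrow> p \<in> polys n"
  by (simp add: Balg_iff)

lemma hom_deg_wick:
  assumes p: "hom_deg n d p" and q: "hom_deg n e q"
  shows "hom_deg n (d + e) (wick n h p q)"
  unfolding hom_deg_def
proof
  fix c assume "c \<in> supp (wick n h p q)"
  then obtain a b M where a: "a \<in> supp p" and b: "b \<in> supp q" and M: "M \<in> contractions n a b"
    and c: "c = contract a b M"
    using supp_wick_subset unfolding wick_support_def by blast
  have Ma: "\<forall>i. M i \<le> snd a i" and Mb: "\<forall>i. M i \<le> fst b i" using M by (auto simp: contractions_def)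
  then have "fst c = (\<lambda>i. fst b i - M i + fst a i)" "snd c = (\<lambda>i. snd a i - M i + snd b i)"
    by (auto simp: c contract_def fun_eq_iff)
  then have "mdeg n M + mdeg n (snd c) = mdeg n (snd a) + mdeg n (snd b)"
    "mdeg n M + mdeg n (fst c) = mdeg n (fst a) + mdeg n (fst b)"
    using mdeg_add_diff[OF Ma, of n "snd b"] mdeg_add_diff[OF Mb, of n "fst a"] by simp_all
  moreover have "int (mdeg n (snd a)) = int (mdeg n (fst a)) + d" using p a by (simp add: hom_deg_def)
  moreover have "int (mdeg n (snd b)) = int (mdeg n (fst b)) + e" using q b by (simp add: hom_deg_def)
  ultimately show "int (mdeg n (snd c)) = int (mdeg n (fst c)) + (d + e)" by linarith
qed

lemma hom_deg_padd: "hom_deg n d p \<Longrightarrow> hom_deg n d q \<Longrightarrow> hom_deg n d (padd p q)"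
  unfolding hom_deg_def using supp_padd[of p q] by blast

lemma hom_deg_psmult: "hom_deg n d p \<Longrightarrow> hom_deg n d (psmult x p)"
  unfolding hom_deg_def using supp_psmult[of x p] by blast

lemma hom_deg_psum: "\<forall>k\<in>S. hom_deg n d (F k) \<Longrightarrow> hom_deg n d (psum S F)"
  unfolding hom_deg_def using supp_psum[of S F] by blast

lemma hom_deg_pzero: "hom_deg n d pzero"
  by (simp add: hom_deg_def pzero_def supp_def)

lemma hom_deg_pmon: "int (mdeg n (snd c)) = int (mdeg n (fst c)) + d \<Longrightarrow> hom_deg n d (pmon c)"
  by (simp add: hom_deg_def supp_pmon)

lemma hom_deg_punit: "hom_deg n 0 punit"
  by (simp add: punit_eq_pmon hom_deg_pmon mdeg_def)

lemma hom_deg_zvar: "j \<le> n \<Longrightarrow> hom_deg n (-1) (zvar j)"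
  by (simp add: zvar_def hom_deg_pmon mdeg_unitidx)

lemma hom_deg_zbar: "j \<le> n \<Longrightarrow> hom_deg n 1 (zbar j)"
  by (simp add: zbar_def hom_deg_pmon mdeg_unitidx)

lemma hom_deg_Jpoly: "hom_deg n 0 (Jpoly n)"
  unfolding Jpoly_eq_psum_pmon by (rule hom_deg_psum) (simp add: hom_deg_pmon)

lemma hom_deg_pstar: "hom_deg n d p \<Longrightarrow> hom_deg n (-d) (pstar p)"
  by (auto simp: hom_deg_def supp_pstar)

lemma wick_Balg_of_hom_deg:
  "p \<in> polys n \<Longrightarrow> q \<in> polys n \<Longrightarrow> hom_deg n d p \<Longrightarrow> hom_deg n (-d) q \<Longrightarrow> wick n h p q \<in> Balg n"
  using hom_deg_wick[of n d p "-d" q h] by (simp add: Balg_iff)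

lemma Balg_wick [simp]: "p \<in> Balg n \<Longrightarrow> q \<in> Balg n \<Longrightarrow> wick n h p q \<in> Balg n"
  using wick_Balg_of_hom_deg[of p n q 0] by (simp add: Balg_iff)

lemma Balg_padd [simp]: "p \<in> Balg n \<Longrightarrow> q \<in> Balg n \<Longrightarrow> padd p q \<in> Balg n"
  by (simp add: Balg_iff hom_deg_padd)

lemma Balg_psmult [simp]: "p \<in> Balg n \<Longrightarrow> psmult x p \<in> Balg n"
  by (simp add: Balg_iff hom_deg_psmult)

lemma Balg_pstar [simp]: "p \<in> Balg n \<Longrightarrow> pstar p \<in> Balg n"
  using hom_deg_pstar[of n 0 p] by (simp add: Balg_iff)

lemma Balg_psum [simp]: "finite S \<Longrightarrow> \<forall>k\<in>S. F k \<in> Balg n \<Longrightarrow> psum S F \<in> Balg n"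
  by (simp add: Balg_iff hom_deg_psum)

lemma Balg_punit [simp]: "punit \<in> Balg n"
  by (simp add: Balg_iff hom_deg_punit)

lemma Balg_pzero [simp]: "pzero \<in> Balg n"
  by (simp add: Balg_iff hom_deg_pzero)

lemma Balg_Jpoly [simp]: "Jpoly n \<in> Balg n"
  by (simp add: Balg_iff hom_deg_Jpoly)

lemma mdeg_shift_idx:
  assumes "idx_le n K A"
  shows "mdeg n (shift_idx K L A) + mdeg n K = mdeg n A + mdeg n L"
proof -
  have "(A i - K i + L i) + K i = A i + L i" if "i \<le> n" for i
  proof -
    have "K i \<le> A i" using assms that by (simp add: idx_le_def)
    then show ?thesis by simp
  qed
  then show ?thesis unfolding mdeg_def shift_idx_def sum.distrib[symmetric] by (intro sum.cong) auto
qed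

context wick_algebra
begin

text \<open>In the Fock representation \<open>J\<close> is multiplication by \<open>h |A|\<close>, and a monomial of degree \<open>d\<close>
  shifts \<open>|A|\<close> by \<open>d\<close>.\<close>

lemma wick_Jpoly_commute:
  assumes p: "p \<in> polys n" and d: "hom_deg n d p"
  shows "p \<star> Jpoly n = padd (Jpoly n \<star> p) (psmult (of_int d * of_real h) p)"
proof (rule polys_eqI)
  fix f
  show "fock n h (p \<star> Jpoly n) f = fock n h (padd (Jpoly n \<star> p) (psmult (of_int d * of_real h) p)) f"
  proof
    fix A
    have shift: "fock_mon n h c (\<lambda>B. of_real h * of_nat (mdeg n B) * f B) A
        = of_real h * (of_nat (mdeg n A) + of_int d) * fock_mon n h c f A" if c: "c \<in> supp p" for c
    proof (cases "idx_le n (fst c) A")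
      case True
      have "int (mdeg n (shift_idx (fst c) (snd c) A)) = int (mdeg n A) + d"
        using mdeg_shift_idx[OF True, of "snd c"] d c unfolding hom_deg_def by auto
      then have "(of_nat (mdeg n (shift_idx (fst c) (snd c) A)) :: complex) = of_nat (mdeg n A) + of_int d"
        by (metis of_int_add of_int_of_nat_eq)
      then show ?thesis unfolding fock_mon_def by (simp add: algebra_simps)
    qed (simp add: fock_mon_def)
    have "fock n h (p \<star> Jpoly n) f A = (\<Sum>c\<in>supp p. p c * fock_mon n h c (\<lambda>B. of_real h * of_nat (mdeg n B) * f B) A)"
      using p by (simp add: fock_wick fock_Jpoly fock_def)
    also have "\<dots> = (\<Sum>c\<in>supp p. of_real h * (of_nat (mdeg n A) + of_int d) * (p c * fock_mon n h c f A))"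
      by (intro sum.cong refl) (simp add: shift mult.left_commute)
    also have "\<dots> = of_real h * (of_nat (mdeg n A) + of_int d) * fock n h p f A"
      by (simp add: fock_def sum_distrib_left)
    also have "\<dots> = fock n h (padd (Jpoly n \<star> p) (psmult (of_int d * of_real h) p)) f A"
      using p by (simp add: fock_simps fock_Jpoly algebra_simps)
    finally show "fock n h (p \<star> Jpoly n) f A = fock n h (padd (Jpoly n \<star> p) (psmult (of_int d * of_real h) p)) f A" .
  qed
qed (use p in simp_all)

end


section \<open>The cone of sums of Hermitian squares\<close>

lemma poscone_eq_psum: "poscone n h =
  {x. \<exists>(m::nat) g. (\<forall>j<m. g j \<in> Balg n) \<and> x = psum {..<m} (\<lambda>j. wick n h (pstar (g j)) (g j))}"
  by (simp add: poscone_def psum_def)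

lemma poscone_pzero: "pzero \<in> poscone n h"
  unfolding poscone_eq_psum by (auto simp: psum_def pzero_def intro!: exI[of _ 0])

lemma poscone_square: "g \<in> Balg n \<Longrightarrow> wick n h (pstar g) g \<in> poscone n h"
  unfolding poscone_eq_psum by (intro CollectI exI[of _ 1] exI[of _ "\<lambda>_. g"]) (simp add: psum_def)

lemma psum_lessThan_add:
  fixes m1 m2 :: nat
  shows "psum {..<m1 + m2} F = padd (psum {..<m1} F) (psum {..<m2} (\<lambda>j. F (m1 + j)))"
  by (induction m2) (simp_all add: psum_def padd_def fun_eq_iff)

lemma poscone_padd:
  assumes "x \<in> poscone n h" "y \<in> poscone n h"
  shows "padd x y \<in> poscone n h"
proof -
  obtain m1 m2 :: nat and g1 g2
    where g1: "\<forall>j<m1. g1 j \<in> Balg n" "x = psum {..<m1} (\<lambda>j. wick n h (pstar (g1 j)) (g1 j))"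
      and g2: "\<forall>j<m2. g2 j \<in> Balg n" "y = psum {..<m2} (\<lambda>j. wick n h (pstar (g2 j)) (g2 j))"
    using assms unfolding poscone_eq_psum by blast
  define g where "g j = (if j < m1 then g1 j else g2 (j - m1))" for j
  have "\<forall>j<m1 + m2. g j \<in> Balg n" using g1 g2 by (auto simp: g_def)
  moreover have "padd x y = psum {..<m1 + m2} (\<lambda>j. wick n h (pstar (g j)) (g j))"
    unfolding g1(2) g2(2) psum_lessThan_add by (simp add: g_def psum_def)
  ultimately show ?thesis unfolding poscone_eq_psum by blast
qed

lemma poscone_psum: "finite S \<Longrightarrow> \<forall>k\<in>S. F k \<in> poscone n h \<Longrightarrow> psum S F \<in> poscone n h"
proof (induction S rule: finite_induct)
  case empty
  then show ?case using poscone_pzero by (simp add: psum_def pzero_def)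
next
  case (insert k S)
  have "psum (insert k S) F = padd (F k) (psum S F)"
    using insert.hyps by (simp add: psum_def padd_def fun_eq_iff)
  then show ?case using insert by (simp add: poscone_padd)
qed

lemma poscone_induct [consumes 1, case_names pzero square]:
  assumes x: "x \<in> poscone n h" and pzero: "Q pzero"
    and square: "\<And>y g. Q y \<Longrightarrow> y \<in> poscone n h \<Longrightarrow> g \<in> Balg n \<Longrightarrow> Q (padd y (wick n h (pstar g) g))"
  shows "Q x"
proof -
  obtain m :: nat and g where g: "\<forall>j<m. g j \<in> Balg n" "x = psum {..<m} (\<lambda>j. wick n h (pstar (g j)) (g j))"
    using x unfolding poscone_eq_psum by blast
  have "Q (psum {..<k} (\<lambda>j. wick n h (pstar (g j)) (g j))) \<and> psum {..<k} (\<lambda>j. wick n h (pstar (g j)) (g j)) \<in> poscone n h"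
    if "k \<le> m" for k
    using that
  proof (induction k)
    case 0
    then show ?case using pzero poscone_pzero by (simp add: psum_def pzero_def)
  next
    case (Suc k)
    have "psum {..<Suc k} (\<lambda>j. wick n h (pstar (g j)) (g j))
        = padd (psum {..<k} (\<lambda>j. wick n h (pstar (g j)) (g j))) (wick n h (pstar (g k)) (g k))"
      by (simp add: psum_def padd_def fun_eq_iff)
    then show ?case using Suc g by (auto intro!: square poscone_padd poscone_square)
  qed
  then show ?thesis using g by simp
qed

lemma poscone_Balg: "x \<in> poscone n h \<Longrightarrow> x \<in> Balg n"
  by (induction rule: poscone_induct) simp_all

lemma poscone_hermitian: "x \<in> poscone n h \<Longrightarrow> pstar x = x"
  by (induction rule: poscone_induct) (simp_all add: pstar_padd pstar_wick)

lemma (in wick_algebra) poscone_psmult: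
  assumes x: "x \<in> poscone n h" and r: "r \<ge> 0"
  shows "psmult (of_real r) x \<in> poscone n h"
  using x
proof (induction rule: poscone_induct)
  case pzero
  then show ?case using poscone_pzero by (simp add: psmult_def pzero_def)
next
  case (square y g)
  let ?s = "psmult (of_real (sqrt r)) g"
  have "psmult (of_real r) (pstar g \<star> g) = pstar ?s \<star> ?s"
    using square.hyps r
    by (simp add: Balg_polys pstar_psmult wick_psmult_left wick_psmult_right psmult_psmult flip: of_real_mult)
  then show ?case using square by (simp add: psmult_padd poscone_padd poscone_square)
qed


definition pconst :: "complex \<Rightarrow> bpoly" where
  "pconst a = psmult a punit"

lemma pconst_polys [simp]: "pconst a \<in> polys n"
  by (simp add: pconst_def)

lemma Balg_pconst [simp]: "pconst a \<in> Balg n"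
  by (simp add: pconst_def)

context wick_algebra
begin

definition J_plus :: "complex \<Rightarrow> bpoly" where
  "J_plus a = padd (Jpoly n) (pconst a)"

lemma J_plus_polys [simp]: "J_plus a \<in> polys n"
  by (simp add: J_plus_def)

lemma Balg_J_plus [simp]: "J_plus a \<in> Balg n"
  by (simp add: J_plus_def)

lemma J_plus_0: "J_plus 0 = Jpoly n"
  by (simp add: J_plus_def pconst_def padd_def psmult_def)

lemma wick_pconst_left: "p \<in> polys n \<Longrightarrow> pconst a \<star> p = psmult a p"
  by (simp add: pconst_def wick_psmult_left wick_punit_left)

lemma wick_pconst_right: "p \<in> polys n \<Longrightarrow> p \<star> pconst a = psmult a p"
  by (simp add: pconst_def wick_psmult_right wick_punit_right)

lemma J_plus_wick_commute:
  assumes "X \<in> polys n" and "hom_deg n d X"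
  shows "J_plus a \<star> X = X \<star> J_plus (a - of_int d * of_real h)"
  using assms
  by (simp add: J_plus_def wick_padd_left wick_padd_right wick_pconst_left wick_pconst_right
      wick_Jpoly_commute) (simp add: padd_def psmult_def fun_eq_iff algebra_simps)

text \<open>Division with remainder of \<open>(J + a)(J + b)\<close> by \<open>J - m\<close>.\<close>

lemma J_plus_wick_J_plus:
  "J_plus a \<star> J_plus b = padd (pconst ((m + a) * (m + b))) (J_plus (- m) \<star> J_plus (m + a + b))"
  by (simp add: J_plus_def wick_padd_left wick_padd_right wick_pconst_left wick_pconst_right)
    (simp add: pconst_def padd_def psmult_def fun_eq_iff algebra_simps)

lemma psum_zvar_wick_zbar: "psum {..n} (\<lambda>j. zvar j \<star> zbar j) = J_plus 0"
  by (simp add: J_plus_0 Jpoly_eq_psum_wick)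

lemma psum_zbar_wick_zvar: "psum {..n} (\<lambda>j. zbar j \<star> zvar j) = J_plus (of_nat (n + 1) * of_real h)"
proof -
  have "psum {..n} (\<lambda>j. zbar j \<star> zvar j) = psum {..n} (\<lambda>j. padd (zvar j \<star> zbar j) (pconst (of_real h)))"
    unfolding psum_def by (intro ext sum.cong refl) (simp add: wick_zbar_zvar pconst_def)
  also have "\<dots> = J_plus (of_nat (n + 1) * of_real h)"
    by (simp add: J_plus_def Jpoly_eq_psum_wick psum_def padd_def pconst_def psmult_def
        sum.distrib fun_eq_iff)
  finally show ?thesis .
qed

end


section \<open>Positivity modulo \<open>J - \<mu>\<close>\<close>

context wick_algebra
begin

definition pos_mod_J :: "real \<Rightarrow> real \<Rightarrow> bool" where
  "pos_mod_J \<mu> r \<longleftrightarrow> (\<exists>y\<in>Balg n. padd (pconst (of_real r)) (J_plus (- of_real \<mu>) \<star> y) \<in> poscone n h)"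

lemma pos_mod_J_one: "pos_mod_J \<mu> 1"
proof -
  have "padd (pconst 1) (J_plus (- of_real \<mu>) \<star> pzero) = pstar punit \<star> punit"
    by (simp add: wick_pzero_right wick_punit_left) (simp add: pconst_def padd_def psmult_def pzero_def)
  then show ?thesis unfolding pos_mod_J_def of_real_1
    using poscone_square[OF Balg_punit, of n h] by (intro bexI[of _ pzero]) simp_all
qed

lemma pos_mod_J_scale:
  assumes "pos_mod_J \<mu> r" and "s \<ge> 0"
  shows "pos_mod_J \<mu> (s * r)"
proof -
  obtain y where y: "y \<in> Balg n" and c: "padd (pconst (of_real r)) (J_plus (- of_real \<mu>) \<star> y) \<in> poscone n h"
    using assms(1) unfolding pos_mod_J_def by blast
  have "psmult (of_real s) (padd (pconst (of_real r)) (J_plus (- of_real \<mu>) \<star> y))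
      = padd (pconst (of_real (s * r))) (J_plus (- of_real \<mu>) \<star> psmult (of_real s) y)"
    using y by (simp add: Balg_polys wick_psmult_right psmult_padd pconst_def psmult_psmult)
  then show ?thesis unfolding pos_mod_J_def using poscone_psmult[OF c assms(2)] y by force
qed

end

text \<open>The two families \<open>u = z\<close> and \<open>u = \<bar>z\<close> of ladder operators.  Conjugating by them maps the
  cone into itself and, because \<open>u\<^sub>i (J + a) = (J + a + d h) u\<^sub>i\<close>, turns positivity modulo
  \<open>J - (\<mu> + d h)\<close> into positivity modulo \<open>J - \<mu>\<close>.\<close>

locale ladder = wick_algebra +
  fixes u :: "nat \<Rightarrow> bpoly" and d :: int and c0 c1 :: real
  assumes u_polys: "i \<le> n \<Longrightarrow> u i \<in> polys n"
    and hom_deg_u: "i \<le> n \<Longrightarrow> hom_deg n d (u i)"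
    and psum_pstar_u_wick_u: "psum {..n} (\<lambda>i. pstar (u i) \<star> u i) = J_plus (of_real c0)"
    and psum_u_wick_pstar_u: "psum {..n} (\<lambda>i. u i \<star> pstar (u i)) = J_plus (of_real c1)"
begin

definition conj_sum :: "bpoly \<Rightarrow> bpoly" where
  "conj_sum x = psum {..n} (\<lambda>i. (u i \<star> x) \<star> pstar (u i)) \<star> J_plus (of_real (c0 + of_int d * h))"

lemma Balg_u_wick_pstar_u [simp]:
  "x \<in> Balg n \<Longrightarrow> i \<le> n \<Longrightarrow> j \<le> n \<Longrightarrow> (u i \<star> x) \<star> pstar (u j) \<in> Balg n"
  using hom_deg_wick[OF hom_deg_u Balg_iff[THEN iffD1, THEN conjunct2], of i x h]
  by (intro wick_Balg_of_hom_deg[of _ n _ d]) (simp_all add: Balg_polys u_polys hom_deg_pstar hom_deg_u)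

lemma u_wick_J_plus: "i \<le> n \<Longrightarrow> u i \<star> J_plus a = J_plus (a + of_int d * of_real h) \<star> u i"
  using J_plus_wick_commute[OF u_polys hom_deg_u, of i "a + of_int d * of_real h"] by simp

lemma conj_sum_padd: "x \<in> polys n \<Longrightarrow> y \<in> polys n \<Longrightarrow> conj_sum (padd x y) = padd (conj_sum x) (conj_sum y)"
  by (simp add: conj_sum_def u_polys wick_padd_left wick_padd_right psum_padd)

lemma conj_sum_pzero: "conj_sum pzero = pzero"
  by (simp add: conj_sum_def u_polys wick_pzero_left wick_pzero_right)

lemma conj_sum_square:
  assumes g: "g \<in> Balg n"
  shows "conj_sum (pstar g \<star> g) =
    psum {..n} (\<lambda>i. psum {..n} (\<lambda>j. pstar ((u j \<star> g) \<star> pstar (u i)) \<star> ((u j \<star> g) \<star> pstar (u i))))"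
proof -
  have gP: "g \<in> polys n" using g by (rule Balg_polys)
  let ?c = "of_real (c0 + of_int d * h)"
  have "psum {..n} (\<lambda>j. pstar ((u j \<star> g) \<star> pstar (u i)) \<star> ((u j \<star> g) \<star> pstar (u i)))
     = ((u i \<star> (pstar g \<star> g)) \<star> pstar (u i)) \<star> J_plus ?c" if i: "i \<le> n" for i
  proof -
    have "psum {..n} (\<lambda>j. pstar ((u j \<star> g) \<star> pstar (u i)) \<star> ((u j \<star> g) \<star> pstar (u i)))
        = u i \<star> (pstar g \<star> (psum {..n} (\<lambda>j. pstar (u j) \<star> u j) \<star> (g \<star> pstar (u i))))"
      using gP i by (simp add: u_polys wick_assoc pstar_wick wick_psum_left wick_psum_right)
    also have "psum {..n} (\<lambda>j. pstar (u j) \<star> u j) \<star> (g \<star> pstar (u i)) = (g \<star> pstar (u i)) \<star> J_plus ?c"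
    proof -
      have "hom_deg n (0 + - d) (g \<star> pstar (u i))"
        using g i by (intro hom_deg_wick hom_deg_pstar hom_deg_u) (simp add: Balg_iff)
      then have "J_plus (of_real c0) \<star> (g \<star> pstar (u i))
          = (g \<star> pstar (u i)) \<star> J_plus (of_real c0 - of_int (0 + - d) * of_real h)"
        using gP i by (intro J_plus_wick_commute) (simp_all add: u_polys)
      then show ?thesis unfolding psum_pstar_u_wick_u by simp
    qed
    finally show ?thesis using gP i by (simp add: u_polys wick_assoc)
  qed
  then show ?thesis unfolding conj_sum_def using gP by (simp add: u_polys wick_psum_left)
qed

lemma poscone_conj_sum: "x \<in> poscone n h \<Longrightarrow> conj_sum x \<in> poscone n h"
proof (induction rule: poscone_induct)
  case pzero
  then show ?case by (simp add: conj_sum_pzero poscone_pzero)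
next
  case (square y g)
  have "conj_sum (pstar g \<star> g) \<in> poscone n h"
    unfolding conj_sum_square[OF square.hyps(2)] using square.hyps(2)
    by (intro poscone_psum ballI poscone_square) (simp_all add: Balg_polys)
  then show ?case using square by (simp add: conj_sum_padd poscone_padd Balg_polys poscone_Balg)
qed

lemma conj_sum_pconst:
  "conj_sum (pconst a) = psmult a (J_plus (of_real c1) \<star> J_plus (of_real (c0 + of_int d * h)))"
  by (simp add: conj_sum_def u_polys wick_pconst_right wick_psmult_left psum_psmult psum_u_wick_pstar_u)

lemma conj_sum_J_plus_wick:
  assumes "y \<in> polys n"
  shows "conj_sum (J_plus a \<star> y) = J_plus (a + of_int d * of_real h) \<star>
    (psum {..n} (\<lambda>i. (u i \<star> y) \<star> pstar (u i)) \<star> J_plus (of_real (c0 + of_int d * h)))"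
proof -
  have "u i \<star> (J_plus a \<star> X) = J_plus (a + of_int d * of_real h) \<star> (u i \<star> X)"
    if "i \<le> n" "X \<in> polys n" for i X
    using that by (simp add: u_polys u_wick_J_plus flip: wick_assoc)
  then show ?thesis unfolding conj_sum_def using assms
    by (simp add: u_polys wick_assoc wick_psum_left wick_psum_right)
qed

lemma pos_mod_J_step:
  assumes "pos_mod_J (\<mu> + d * h) r"
  shows "pos_mod_J \<mu> (r * ((\<mu> + c1) * (\<mu> + c0 + d * h)))"
proof -
  obtain y where y: "y \<in> Balg n"
    and C: "padd (pconst (of_real r)) (J_plus (- of_real (\<mu> + d * h)) \<star> y) \<in> poscone n h"
    using assms unfolding pos_mod_J_def by blast
  define c where "c = c0 + of_int d * h"
  define Y where "Y = psum {..n} (\<lambda>i. (u i \<star> y) \<star> pstar (u i))"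
  define Z where "Z = padd (psmult (of_real r) (J_plus (of_real (\<mu> + c1 + c)))) (Y \<star> J_plus (of_real c))"
  have "Z \<in> Balg n" using y by (simp add: Z_def Y_def)
  have JJ: "J_plus (of_real c1) \<star> J_plus (of_real c) = padd (pconst ((of_real \<mu> + of_real c1) * (of_real \<mu> + of_real c)))
      (J_plus (- of_real \<mu>) \<star> J_plus (of_real \<mu> + of_real c1 + of_real c))"
    by (rule J_plus_wick_J_plus)
  have "conj_sum (padd (pconst (of_real r)) (J_plus (- of_real (\<mu> + d * h)) \<star> y))
      = padd (psmult (of_real r) (J_plus (of_real c1) \<star> J_plus (of_real c)))
          (J_plus (- of_real \<mu>) \<star> (Y \<star> J_plus (of_real c)))"
    using y unfolding Y_def c_def by (simp add: Balg_polys conj_sum_padd conj_sum_pconst conj_sum_J_plus_wick)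
  also have "\<dots> = padd (pconst (of_real (r * ((\<mu> + c1) * (\<mu> + c0 + d * h))))) (J_plus (- of_real \<mu>) \<star> Z)"
    unfolding JJ Z_def using \<open>Z \<in> Balg n\<close> y
    by (simp add: Balg_polys Y_def wick_padd_right wick_psmult_right)
      (simp add: c_def padd_def psmult_def pconst_def fun_eq_iff algebra_simps)
  finally show ?thesis unfolding pos_mod_J_def using poscone_conj_sum[OF C] \<open>Z \<in> Balg n\<close> by metis
qed

end


sublocale wick_algebra \<subseteq> zvar_ladder: ladder n h zvar "-1" "real (n + 1) * h" 0
  by unfold_locales (simp_all add: hom_deg_zvar psum_zbar_wick_zvar psum_zvar_wick_zbar)

sublocale wick_algebra \<subseteq> zbar_ladder: ladder n h zbar 1 0 "real (n + 1) * h"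
  by unfold_locales (simp_all add: hom_deg_zbar psum_zbar_wick_zvar psum_zvar_wick_zbar)

context wick_algebra
begin

lemma pos_mod_J_step_up: "pos_mod_J (\<mu> - h) r \<Longrightarrow> pos_mod_J \<mu> (r * (\<mu> * (\<mu> + n * h)))"
  using zvar_ladder.pos_mod_J_step[of \<mu> r] by (simp add: algebra_simps)

lemma pos_mod_J_step_down: "pos_mod_J (\<mu> + h) r \<Longrightarrow> pos_mod_J \<mu> (r * ((\<mu> + h) * (\<mu> + (n + 1) * h)))"
  using zbar_ladder.pos_mod_J_step[of \<mu> r] by (simp add: algebra_simps)

end


context wick_algebra
begin

lemma wick_zbar_zvar_left:
  "i \<le> n \<Longrightarrow> j \<le> n \<Longrightarrow> X \<in> polys n \<Longrightarrow>
    zbar i \<star> (zvar j \<star> X) = padd (zvar j \<star> (zbar i \<star> X)) (psmult (if i = j then of_real h else 0) X)"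
  by (simp add: wick_assoc[symmetric] wick_zbar_zvar wick_padd_left wick_psmult_left wick_punit_left)

lemma wick_zvar_commute_left: "i \<le> n \<Longrightarrow> j \<le> n \<Longrightarrow> X \<in> polys n \<Longrightarrow> zvar i \<star> (zvar j \<star> X) = zvar j \<star> (zvar i \<star> X)"
  by (simp add: wick_assoc[symmetric] wick_zvar_commute)

lemma wick_zbar_commute_left: "i \<le> n \<Longrightarrow> j \<le> n \<Longrightarrow> X \<in> polys n \<Longrightarrow> zbar i \<star> (zbar j \<star> X) = zbar j \<star> (zbar i \<star> X)"
  by (simp add: wick_assoc[symmetric] wick_zbar_commute)

text \<open>For \<open>n = 1\<close> and \<open>\<mu> = -h\<close> both ladder steps turn the certificate \<open>1\<close> into \<open>0\<close>; instead, with
  \<open>E\<^sub>i\<^sub>j = z\<^sub>i \<bar>z\<^sub>j\<close>, the identity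
  \<open>E\<^sub>0\<^sub>1\<^sup>* E\<^sub>0\<^sub>1 + E\<^sub>1\<^sub>0\<^sup>* E\<^sub>1\<^sub>0 + (E\<^sub>0\<^sub>0 - E\<^sub>1\<^sub>1)\<^sup>* (E\<^sub>0\<^sub>0 - E\<^sub>1\<^sub>1) / 2 = \<mu>(\<mu> + 2h)/2 + (J - \<mu>)(J/2 + \<mu>/2 + h)\<close>
  is checked by normal ordering.\<close>

lemma pos_mod_J_two_modes:
  assumes "n = 1"
  shows "pos_mod_J \<mu> (\<mu> * (\<mu> + 2 * h) / 2)"
proof -
  define E where "E i j = zvar i \<star> zbar j" for i j
  define D where "D = padd (E 0 0) (psmult (-1) (E 1 1))"
  define c where "c = padd (padd (pstar (E 0 1) \<star> E 0 1) (pstar (E 1 0) \<star> E 1 0)) (psmult (of_real (1/2)) (pstar D \<star> D))"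
  define y where "y = padd (psmult (1/2) (Jpoly n)) (pconst (of_real \<mu> / 2 + of_real h))"
  have EB: "E i j \<in> Balg n" if "i \<le> 1" "j \<le> 1" for i j
    unfolding E_def using that assms
    by (intro wick_Balg_of_hom_deg[of _ n _ "-1"]) (simp_all add: hom_deg_zvar hom_deg_zbar)
  then have "c \<in> poscone n h"
    unfolding c_def D_def by (intro poscone_padd poscone_square poscone_psmult) simp_all
  moreover have "y \<in> Balg n" by (simp add: y_def)
  moreover have "c = padd (pconst (of_real (\<mu> * (\<mu> + 2 * h) / 2))) (J_plus (- of_real \<mu>) \<star> y)"
  proof -
    have J: "Jpoly n = padd (zvar 0 \<star> zbar 0) (zvar 1 \<star> zbar 1)"
      using Jpoly_eq_psum_wick assms by (simp add: psum_def padd_def atMost_Suc fun_eq_iff)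
    have "1 \<le> n" using assms by simp
    then show ?thesis
      unfolding c_def y_def D_def E_def J_plus_def pconst_def J
      by (simp add: wick_assoc wick_padd_left wick_padd_right wick_psmult_left wick_psmult_right
          wick_punit_left wick_punit_right pstar_wick pstar_padd pstar_psmult
          wick_zbar_zvar_left wick_zbar_commute_left wick_zvar_commute_left wick_zbar_zvar
          wick_zbar_commute wick_zvar_commute)
        (simp add: padd_def psmult_def fun_eq_iff algebra_simps)
  qed
  ultimately show ?thesis unfolding pos_mod_J_def by metis
qed

end


section \<open>The non-exceptional values of \<open>\<mu>\<close>\<close>

context wick_algebra
begin

lemma pos_mod_J_negative_base:
  assumes n: "n \<ge> 1" and "- (n + 1) * h < \<mu>" and "\<mu> < 0"
  shows "\<exists>r<0. pos_mod_J \<mu> r"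
proof -
  have "- n * h < \<mu> \<or> \<mu> < - h \<or> (n = 1 \<and> \<mu> = - h)"
  proof (cases "n = 1")
    case False
    then have "2 * h \<le> n * h" using n h_pos by (intro mult_right_mono) simp_all
    then show ?thesis using h_pos by linarith
  qed auto
  then consider "- n * h < \<mu>" | "\<mu> < - h" | "n = 1" "\<mu> = - h" by blast
  then show ?thesis
  proof cases
    case 1
    then have "\<mu> * (\<mu> + n * h) < 0" using \<open>\<mu> < 0\<close> by (simp add: mult_neg_pos)
    then show ?thesis using pos_mod_J_step_up[OF pos_mod_J_one] by fastforce
  next
    case 2
    then have "(\<mu> + h) * (\<mu> + (n + 1) * h) < 0" using assms by (intro mult_neg_pos) (simp_all add: algebra_simps)
    then show ?thesis using pos_mod_J_step_down[OF pos_mod_J_one] by fastforce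
  next
    case 3
    then have "\<mu> * (\<mu> + 2 * h) / 2 < 0" using h_pos by (simp add: mult_neg_pos)
    then show ?thesis using pos_mod_J_two_modes[OF \<open>n = 1\<close>] by blast
  qed
qed

lemma pos_mod_J_positive:
  fixes k :: nat
  assumes "n \<ge> 1" and "- h < \<mu> - k * h" and "\<mu> - k * h < 0"
  shows "\<exists>r<0. pos_mod_J \<mu> r"
  using assms(2,3)
proof (induction k arbitrary: \<mu>)
  case 0
  have "- (n + 1) * h \<le> - h" using h_pos by (simp add: algebra_simps)
  with 0 show ?case by (intro pos_mod_J_negative_base[OF assms(1)]) simp_all
next
  case (Suc k)
  have "\<exists>r<0. pos_mod_J (\<mu> - h) r" using Suc.prems by (intro Suc.IH) (simp_all add: algebra_simps)
  then obtain r where r: "r < 0" "pos_mod_J (\<mu> - h) r" by blast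
  have "h * k < \<mu>" using Suc.prems by (simp add: algebra_simps)
  moreover have "0 \<le> h * k" using h_pos by simp
  ultimately have "\<mu> > 0" by linarith
  then have "r * (\<mu> * (\<mu> + n * h)) < 0" using r(1) h_pos by (intro mult_neg_pos mult_pos_pos add_pos_nonneg) simp_all
  then show ?case using pos_mod_J_step_up[OF r(2)] by blast
qed

lemma pos_mod_J_below:
  fixes k :: nat
  assumes "n \<ge> 1" and "- (n + 1) * h < \<mu> + k * h" and "\<mu> + k * h < - n * h"
  shows "\<exists>r<0. pos_mod_J \<mu> r"
  using assms(2,3)
proof (induction k arbitrary: \<mu>)
  case 0
  have "- n * h < 0" using assms(1) h_pos by simp
  with 0 show ?case by (intro pos_mod_J_negative_base[OF assms(1)]) simp_all
next
  case (Suc k)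
  have "\<exists>r<0. pos_mod_J (\<mu> + h) r" using Suc.prems by (intro Suc.IH) (simp_all add: algebra_simps)
  then obtain r where r: "r < 0" "pos_mod_J (\<mu> + h) r" by blast
  have "\<mu> + (h + h * k) < - (h * n)" using Suc.prems by (simp add: algebra_simps)
  moreover have "0 \<le> h * k" "0 \<le> h * n" using h_pos by simp_all
  ultimately have "\<mu> + h < 0" "\<mu> + (n + 1) * h < 0" by (simp_all add: algebra_simps)
  then have "r * ((\<mu> + h) * (\<mu> + (n + 1) * h)) < 0" using r(1) by (intro mult_neg_pos mult_neg_neg)
  then show ?case using pos_mod_J_step_down[OF r(2)] by blast
qed

end


lemma nonexceptional_cases:
  fixes h \<mu> :: real and n :: nat
  assumes h: "h > 0"
    and above: "\<forall>k::nat. \<mu> \<noteq> h * real k" and below: "\<forall>k::nat. \<mu> \<noteq> - h * (1 + real n + real k)"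
  obtains "- (n + 1) * h < \<mu>" "\<mu> < 0"
    | k :: nat where "- h < \<mu> - k * h" "\<mu> - k * h < 0"
    | k :: nat where "- (n + 1) * h < \<mu> + k * h" "\<mu> + k * h < - n * h"
proof -
  consider "\<mu> \<ge> 0" | "- (n + 1) * h < \<mu>" "\<mu> < 0" | "\<mu> \<le> - (n + 1) * h" by linarith
  then show thesis
  proof cases
    case 1
    define k where "k = nat \<lceil>\<mu> / h\<rceil>"
    have "real k = of_int \<lceil>\<mu> / h\<rceil>" using 1 h by (simp add: k_def)
    then have "real k - 1 < \<mu> / h" "\<mu> / h \<le> real k" by linarith+
    moreover have "\<mu> / h \<noteq> real k" using above h by (auto simp: field_simps)
    ultimately have "real k - 1 < \<mu> / h" "\<mu> / h < real k" by simp_all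
    then have "- h < \<mu> - k * h" "\<mu> - k * h < 0" using h by (simp_all add: field_simps)
    then show thesis by (rule that(2))
  next
    case 2
    then show thesis by (rule that(1))
  next
    case 3
    define t where "t = - \<mu> / h - (n + 1)"
    have \<mu>: "\<mu> = - h * (1 + real n + t)" using h by (simp add: t_def field_simps)
    have "t \<ge> 0" using 3 h by (simp add: t_def field_simps)
    define k where "k = nat \<lfloor>t\<rfloor>"
    have "real k = of_int \<lfloor>t\<rfloor>" using \<open>t \<ge> 0\<close> by (simp add: k_def)
    then have "real k \<le> t" "t < real k + 1" by linarith+
    moreover have "t \<noteq> real k" using below \<mu> by metis
    ultimately have "h * k < h * t" "h * t < h * (k + 1)" using h by simp_all
    then have "- (n + 1) * h < \<mu> + Suc k * h" "\<mu> + Suc k * h < - n * h"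
      unfolding \<mu> by (simp_all add: algebra_simps)
    then show thesis by (rule that(3))
  qed
qed

lemma wick_mem_star_ideal: "y \<in> Balg n \<Longrightarrow> wick n h g y \<in> star_ideal n h {g}"
  by (auto simp: star_ideal_def)

lemma (in wick_algebra) minus_punit_mem_of_pos_mod_J:
  assumes "pos_mod_J \<mu> r" and "r < 0"
  shows "psmult (-1) punit \<in> {padd p q | p q. p \<in> poscone n h \<and>
    q \<in> hermitian_part (star_ideal n h {J_plus (- of_real \<mu>)})}"
proof -
  have "pos_mod_J \<mu> ((- 1 / r) * r)" using assms by (intro pos_mod_J_scale) simp_all
  then obtain y where y: "y \<in> Balg n"
    and c: "padd (pconst (-1)) (J_plus (- of_real \<mu>) \<star> y) \<in> poscone n h" (is "?c \<in> _")
    using \<open>r < 0\<close> unfolding pos_mod_J_def by auto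
  define q where "q = J_plus (- of_real \<mu>) \<star> psmult (-1) y"
  have q: "q = padd (psmult (-1) punit) (psmult (-1) ?c)"
    using y by (simp add: q_def Balg_polys wick_psmult_right) (simp add: padd_def psmult_def pconst_def)
  have "pstar q = q"
    unfolding q pstar_padd[of "psmult (-1) punit"] pstar_psmult poscone_hermitian[OF c] by simp
  moreover have "q \<in> star_ideal n h {J_plus (- of_real \<mu>)}"
    unfolding q_def using y by (simp add: wick_mem_star_ideal)
  moreover have "psmult (-1) punit = padd ?c q"
    unfolding q by (simp add: padd_def psmult_def pconst_def)
  ultimately show ?thesis using c unfolding hermitian_part_def by blast
qed

theorem proposition5p9:
  fixes n :: nat and h \<mu> :: real
  assumes "n \<ge> 1" and "h > 0"
    and "\<forall>k::nat. \<mu> \<noteq> h * real k"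
    and "\<forall>k::nat. \<mu> \<noteq> - h * (1 + real n + real k)"
  shows "psmult (-1) punit \<in>
    {padd p q | p q. p \<in> poscone n h \<and>
       q \<in> hermitian_part (star_ideal n h {padd (Jpoly n) (psmult (- complex_of_real \<mu>) punit)})}"
proof -
  interpret wick_algebra n h using \<open>h > 0\<close> by unfold_locales
  obtain r where "r < 0" "pos_mod_J \<mu> r"
    using assms(2-4)
    by (cases rule: nonexceptional_cases)
      (blast dest: pos_mod_J_negative_base[OF assms(1)] pos_mod_J_positive[OF assms(1)]
        pos_mod_J_below[OF assms(1)])+
  then show ?thesis using minus_punit_mem_of_pos_mod_J by (simp add: J_plus_def pconst_def)
qed

end
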